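(* In the setting described in the context, the exterior differentials of $\rho_0,\kappa_0',\zeta_0'$ are: $$d\rho_0=\Big(\tfrac13\tfrac{\mathcal L_1(\mathcal L_1(\bar k))}{\mathcal L_1(\bar k)}+\tfrac23P\Big)\rho_0\wedge\kappa_0'-\tfrac{\mathcal L_1(k)}{\overline{\mathcal L}_1(k)}\,\rho_0\wedge\zeta_0'+\Big(\tfrac13\tfrac{\overline{\mathcal L}_1(\overline{\mathcal L}_1(k))}{\overline{\mathcal L}_1(k)}+\tfrac23\overline P\Big)\rho_0\wedge\bar\kappa_0'-\tfrac{\overline{\mathcal L}_1(\bar k)}{\mathcal L_1(\bar k)}\,\rho_0\wedge\bar\zeta_0'+i\,\kappa_0'\wedge\bar\kappa_0',$$ $$\begin{aligned}d\kappa_0'={}&\Big(-\tfrac i3\tfrac{\mathcal L_1(\overline{\mathcal L}_1(\overline{\mathcal L}_1(k)))}{\overline{\mathcal L}_1(k)}+\tfrac i9\tfrac{\mathcal L_1(\mathcal L_1(\bar k))\,\overline{\mathcal L}_1(\overline{\mathcal L}_1(k))}{\mathcal L_1(\bar k)\,\overline{\mathcal L}_1(k)}+\tfrac i3\tfrac{\mathcal L_1(\overline{\mathcal L}_1(k))\,\overline{\mathcal L}_1(\overline{\mathcal L}_1(k))}{\overline{\mathcal L}_1(k)^2}-\tfrac i9\tfrac{\mathcal L_1(\mathcal L_1(\bar k))}{\mathcal L_1(\bar k)}\overline P+\tfrac{2i}9\tfrac{\overline{\mathcal L}_1(\overline{\mathcal L}_1(k))}{\overline{\mathcal L}_1(k)}P+\tfrac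 i3\mathcal L_1(\overline P)-\tfrac{2i}9P\overline P\Big)\rho_0\wedge\kappa_0'\\&+\Big(-\tfrac i3\tfrac{\mathcal K(\overline{\mathcal L}_1(\overline{\mathcal L}_1(k)))}{\overline{\mathcal L}_1(k)^2}+\tfrac i3\tfrac{\mathcal K(\overline{\mathcal L}_1(k))\,\overline{\mathcal L}_1(\overline{\mathcal L}_1(k))}{\overline{\mathcal L}_1(k)^3}-\tfrac i3\tfrac{\mathcal L_1(\mathcal L_1(\bar k))}{\mathcal L_1(\bar k)}-\tfrac i3\tfrac{\overline{\mathcal L}_1(\mathcal L_1(k))}{\overline{\mathcal L}_1(k)}-\tfrac23\tfrac{\mathcal T(k)}{\overline{\mathcal L}_1(k)}\Big)\rho_0\wedge\zeta_0'\\&+\Big(-\tfrac i3\tfrac{\overline{\mathcal L}_1(\overline{\mathcal L}_1(\overline{\mathcal L}_1(k)))}{\overline{\mathcal L}_1(k)}+\tfrac{4i}9\tfrac{\overline{\mathcal L}_1(\overline{\mathcal L}_1(k))^2}{\overline{\mathcal L}_1(k)^2}+\tfrac i9\tfrac{\overline{\mathcal L}_1(\overline{\mathcal L}_1(k))}{\overline{\mathcal L}_1(k)}\overline P+\tfrac i3\overline{\mathcal L}_1(\overline P)-\tfrac{2i}9\overline P\,\overline P\Big)\rho_0\wedge\bar\kappa_0'+0\cdot\rho_0\wedge\bar\zeta_0'\\&-\tfrac{\mathcal L_1(k)}{\overline{\mathcal L}_1(k)}\,\kappa_0'\wedge\zeta_0'+\Big(-\tfrac13\tfrac{\overline{\mathcal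 L}_1(\overline{\mathcal L}_1(k))}{\overline{\mathcal L}_1(k)}+\tfrac13\overline P\Big)\kappa_0'\wedge\bar\kappa_0'+\zeta_0'\wedge\bar\kappa_0',\end{aligned}$$ $$\begin{aligned}d\zeta_0'={}&\Big(\tfrac i3\tfrac{\mathcal L_1(\mathcal L_1(\bar k))\,\overline{\mathcal L}_1(\overline{\mathcal L}_1(k))}{\mathcal L_1(\bar k)\,\overline{\mathcal L}_1(k)}-\tfrac i3\tfrac{\mathcal L_1(\overline{\mathcal L}_1(k))\,\overline{\mathcal L}_1(\overline{\mathcal L}_1(k))}{\overline{\mathcal L}_1(k)^2}-\tfrac i3\tfrac{\overline{\mathcal L}_1(\overline{\mathcal L}_1(k))}{\overline{\mathcal L}_1(k)}P+\tfrac i3\tfrac{\mathcal L_1(\overline{\mathcal L}_1(k))}{\overline{\mathcal L}_1(k)}\overline P+\tfrac{\mathcal T(\overline{\mathcal L}_1(k))}{\overline{\mathcal L}_1(k)}\Big)\rho_0\wedge\zeta_0'\\&+\tfrac{\mathcal L_1(\overline{\mathcal L}_1(k))}{\overline{\mathcal L}_1(k)}\,\kappa_0'\wedge\zeta_0'-\tfrac{\overline{\mathcal L}_1(\overline{\mathcal L}_1(k))}{\overline{\mathcal L}_1(k)}\,\zeta_0'\wedge\bar\kappa_0'+\tfrac{\overline{\mathcal L}_1(\bar k)}{\mathcal L_1(\bar k)}\,\zeta_0'\wedge\bar\zeta_0'.\end{aligned}$$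
   Context: Let $M\subset\mathbb C^3$ be a real-analytic real hypersurface, considered locally near a point, represented in holomorphic coordinates $(z_1,z_2,w)$, $w=u+iv$, as a graph $u=F(z_1,z_2,\bar z_1,\bar z_2,v)$; $(z_1,z_2,\bar z_1,\bar z_2,v)$ are coordinates on $M$. Bars denote complex conjugation. Put $A^j:=-iF_{z_j}/(1+iF_v)$ ($j=1,2$), $\mathcal L_j:=\partial_{z_j}+A^j\partial_v$, with conjugates $\overline{\mathcal L}_j$. Let $\ell:=i(\mathcal L_1(\overline{A^1})-\overline{\mathcal L}_1(A^1))$, assumed nowhere zero, and let $\mathcal T:=\ell\,\partial_v$ (so $\mathcal T=i[\mathcal L_1,\overline{\mathcal L}_1]$). Assume the Levi form of $M$ has constant rank $1$ and let $k:=-(\mathcal L_2(\overline{A^1})-\overline{\mathcal L}_1(A^2))/(\mathcal L_1(\overline{A^1})-\overline{\mathcal L}_1(A^1))$ and $\mathcal K:=k\mathcal L_1+\mathcal L_2$ (spanning the Levi kernel). Assume 2-nondegeneracy: $\overline{\mathcal L}_1(k)$ (hence also $\mathcal L_1(\bar k)$) vanishes nowhere. Let $P:=(\ell_{z_1}+A^1\ell_v-\ell A^1_v)/\ell$. Define on $M$ the 1-forms $\rho_0:=\ell^{-1}(dv-A^1dz_1-A^2dz_2-\overline{A^1}d\bar z_1-\overline{A^2}d\bar z_2)$ (real), $B_0:=\overline{\mathcal L}_1(\overline{\mathcal L}_1(k))/\overline{\mathcal L}_1(k)-\overline P$, $\kappa_0':=dz_1-k\,dz_2+\tfrac i3B_0\,\rho_0$,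 $\zeta_0':=\overline{\mathcal L}_1(k)\,dz_2$, together with the conjugates $\bar\kappa_0',\bar\zeta_0'$; $\{\rho_0,\kappa_0',\zeta_0',\bar\kappa_0',\bar\zeta_0'\}$ is a coframe of $\mathbb C\otimes TM$. *)

theory Defs
  imports "HOL-Analysis.Analysis"
begin

text \<open>Coordinates on M: points (z1, z2, v) in C x C x R (real dimension 5).
  Functions on M are maps pt => complex; the defining function F is real-valued.\<close>

type_synonym pt = "complex \<times> complex \<times> real"

definition dirD :: "('a::real_normed_vector \<Rightarrow> 'b::real_normed_vector) \<Rightarrow> 'a \<Rightarrow> 'a \<Rightarrow> 'b" where
  "dirD f h x = frechet_derivative f (at x) h"

coinductive smooth_on :: "'a::real_normed_vector set \<Rightarrow> ('a \<Rightarrow> 'b::real_normed_vector) \<Rightarrow> bool"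
  for U where
  "f differentiable_on U \<Longrightarrow> (\<forall>h. smooth_on U (\<lambda>x. dirD f h x)) \<Longrightarrow> smooth_on U f"

text \<open>Real-analytic on an open set U: smooth and, near every point, equal to the sum of
  its Taylor series (grouped by homogeneous degree).\<close>
definition real_analytic_on :: "'a::real_normed_vector set \<Rightarrow> ('a \<Rightarrow> 'b::real_normed_field) \<Rightarrow> bool" where
  "real_analytic_on U f \<longleftrightarrow> smooth_on U f \<and>
     (\<forall>p\<in>U. \<exists>r>0. ball p r \<subseteq> U \<and>
        (\<forall>q\<in>ball p r. (\<lambda>n. ((\<lambda>g x. dirD g (q - p) x) ^^ n) f p / fact n) sums f q))"

text \<open>Real partial derivatives in the coordinates x1,y1,x2,y2,v (z_j = x_j + i y_j).\<close>
definition dx1 :: "(pt \<Rightarrow> complex) \<Rightarrow> pt \<Rightarrow> complex" where "dx1 f = dirD f (1, 0, 0)"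
definition dy1 :: "(pt \<Rightarrow> complex) \<Rightarrow> pt \<Rightarrow> complex" where "dy1 f = dirD f (\<i>, 0, 0)"
definition dx2 :: "(pt \<Rightarrow> complex) \<Rightarrow> pt \<Rightarrow> complex" where "dx2 f = dirD f (0, 1, 0)"
definition dy2 :: "(pt \<Rightarrow> complex) \<Rightarrow> pt \<Rightarrow> complex" where "dy2 f = dirD f (0, \<i>, 0)"
definition dv :: "(pt \<Rightarrow> complex) \<Rightarrow> pt \<Rightarrow> complex" where "dv f = dirD f (0, 0, 1)"

definition dz1 :: "(pt \<Rightarrow> complex) \<Rightarrow> pt \<Rightarrow> complex" where "dz1 f x = (dx1 f x - \<i> * dy1 f x) / 2"
definition dzb1 :: "(pt \<Rightarrow> complex) \<Rightarrow> pt \<Rightarrow> complex" where "dzb1 f x = (dx1 f x + \<i> * dy1 f x) / 2"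
definition dz2 :: "(pt \<Rightarrow> complex) \<Rightarrow> pt \<Rightarrow> complex" where "dz2 f x = (dx2 f x - \<i> * dy2 f x) / 2"
definition dzb2 :: "(pt \<Rightarrow> complex) \<Rightarrow> pt \<Rightarrow> complex" where "dzb2 f x = (dx2 f x + \<i> * dy2 f x) / 2"

definition Fc :: "(pt \<Rightarrow> real) \<Rightarrow> pt \<Rightarrow> complex" where "Fc F x = complex_of_real (F x)"

definition A1 :: "(pt \<Rightarrow> real) \<Rightarrow> pt \<Rightarrow> complex" where
  "A1 F x = - \<i> * dz1 (Fc F) x / (1 + \<i> * dv (Fc F) x)"
definition A2 :: "(pt \<Rightarrow> real) \<Rightarrow> pt \<Rightarrow> complex" where
  "A2 F x = - \<i> * dz2 (Fc F) x / (1 + \<i> * dv (Fc F) x)"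

definition L1op :: "(pt \<Rightarrow> real) \<Rightarrow> (pt \<Rightarrow> complex) \<Rightarrow> pt \<Rightarrow> complex" where
  "L1op F g x = dz1 g x + A1 F x * dv g x"
definition L2op :: "(pt \<Rightarrow> real) \<Rightarrow> (pt \<Rightarrow> complex) \<Rightarrow> pt \<Rightarrow> complex" where
  "L2op F g x = dz2 g x + A2 F x * dv g x"
definition Lb1op :: "(pt \<Rightarrow> real) \<Rightarrow> (pt \<Rightarrow> complex) \<Rightarrow> pt \<Rightarrow> complex" where
  "Lb1op F g x = dzb1 g x + cnj (A1 F x) * dv g x"
definition Lb2op :: "(pt \<Rightarrow> real) \<Rightarrow> (pt \<Rightarrow> complex) \<Rightarrow> pt \<Rightarrow> complex" where
  "Lb2op F g x = dzb2 g x + cnj (A2 F x) * dv g x"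

definition ell :: "(pt \<Rightarrow> real) \<Rightarrow> pt \<Rightarrow> complex" where
  "ell F x = \<i> * (L1op F (\<lambda>q. cnj (A1 F q)) x - Lb1op F (A1 F) x)"

definition Top :: "(pt \<Rightarrow> real) \<Rightarrow> (pt \<Rightarrow> complex) \<Rightarrow> pt \<Rightarrow> complex" where
  "Top F g x = ell F x * dv g x"

text \<open>Levi form matrix: coefficient of d/dv in i [L_j, Lbar_l].\<close>
definition Lop :: "(pt \<Rightarrow> real) \<Rightarrow> 2 \<Rightarrow> (pt \<Rightarrow> complex) \<Rightarrow> pt \<Rightarrow> complex" where
  "Lop F j = (if j = 1 then L1op F else L2op F)"
definition Lbop :: "(pt \<Rightarrow> real) \<Rightarrow> 2 \<Rightarrow> (pt \<Rightarrow> complex) \<Rightarrow> pt \<Rightarrow> complex" where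
  "Lbop F j = (if j = 1 then Lb1op F else Lb2op F)"
definition Aj :: "(pt \<Rightarrow> real) \<Rightarrow> 2 \<Rightarrow> pt \<Rightarrow> complex" where
  "Aj F j = (if j = 1 then A1 F else A2 F)"
definition levi :: "(pt \<Rightarrow> real) \<Rightarrow> pt \<Rightarrow> complex^2^2" where
  "levi F x = (\<chi> j l. \<i> * (Lop F j (\<lambda>q. cnj (Aj F l q)) x - Lbop F l (Aj F j) x))"

definition kk :: "(pt \<Rightarrow> real) \<Rightarrow> pt \<Rightarrow> complex" where
  "kk F x = - (L2op F (\<lambda>q. cnj (A1 F q)) x - Lb1op F (A2 F) x)
              / (L1op F (\<lambda>q. cnj (A1 F q)) x - Lb1op F (A1 F) x)"

definition Kop :: "(pt \<Rightarrow> real) \<Rightarrow> (pt \<Rightarrow> complex) \<Rightarrow> pt \<Rightarrow> complex" where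
  "Kop F g x = kk F x * L1op F g x + L2op F g x"

definition PP :: "(pt \<Rightarrow> real) \<Rightarrow> pt \<Rightarrow> complex" where
  "PP F x = (dz1 (ell F) x + A1 F x * dv (ell F) x - ell F x * dv (A1 F) x) / ell F x"

text \<open>1-forms: a (complexified) 1-form is a map point => (real tangent vector => complex),
  real-linear in the vector.  Basic coordinate forms:\<close>
definition fz1 :: "pt \<Rightarrow> complex" where "fz1 h = fst h"
definition fz2 :: "pt \<Rightarrow> complex" where "fz2 h = fst (snd h)"
definition fv :: "pt \<Rightarrow> complex" where "fv h = complex_of_real (snd (snd h))"

definition rho0 :: "(pt \<Rightarrow> real) \<Rightarrow> pt \<Rightarrow> pt \<Rightarrow> complex" where
  "rho0 F x h = (fv h - A1 F x * fz1 h - A2 F x * fz2 h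
                 - cnj (A1 F x) * cnj (fz1 h) - cnj (A2 F x) * cnj (fz2 h)) / ell F x"

definition B0 :: "(pt \<Rightarrow> real) \<Rightarrow> pt \<Rightarrow> complex" where
  "B0 F x = Lb1op F (Lb1op F (kk F)) x / Lb1op F (kk F) x - cnj (PP F x)"

definition kappa0 :: "(pt \<Rightarrow> real) \<Rightarrow> pt \<Rightarrow> pt \<Rightarrow> complex" where
  "kappa0 F x h = fz1 h - kk F x * fz2 h + \<i> / 3 * B0 F x * rho0 F x h"

definition zeta0 :: "(pt \<Rightarrow> real) \<Rightarrow> pt \<Rightarrow> pt \<Rightarrow> complex" where
  "zeta0 F x h = Lb1op F (kk F) x * fz2 h"

definition conjform :: "(pt \<Rightarrow> pt \<Rightarrow> complex) \<Rightarrow> pt \<Rightarrow> pt \<Rightarrow> complex" where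
  "conjform \<omega> x h = cnj (\<omega> x h)"

text \<open>Exterior derivative of a 1-form, evaluated on (constant) tangent vectors X, Y:
  d omega (X,Y) = X(omega(Y)) - Y(omega(X)); wedge (a ^ b)(X,Y) = a(X)b(Y) - a(Y)b(X).\<close>
definition extd :: "(pt \<Rightarrow> pt \<Rightarrow> complex) \<Rightarrow> pt \<Rightarrow> pt \<Rightarrow> pt \<Rightarrow> complex" where
  "extd \<omega> x X Y = dirD (\<lambda>q. \<omega> q Y) X x - dirD (\<lambda>q. \<omega> q X) Y x"

definition wedge :: "(pt \<Rightarrow> pt \<Rightarrow> complex) \<Rightarrow> (pt \<Rightarrow> pt \<Rightarrow> complex) \<Rightarrow> pt \<Rightarrow> pt \<Rightarrow> pt \<Rightarrow> complex" where
  "wedge \<alpha> \<beta> x X Y = \<alpha> x X * \<beta> x Y - \<alpha> x Y * \<beta> x X"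

end

theory Submission
  imports Defs
begin

text \<open>Every function on \<open>M\<close> has a derivative that decomposes in the frame \<open>L\<^sub>1, K, L\<^sub>1-bar, K-bar, T\<close>,
  which is dual to the coframe \<open>\<theta> = dz\<^sub>1 - k dz\<^sub>2, dz\<^sub>2, \<theta>-bar, dz\<^sub>2-bar, \<rho>\<^sub>0\<close>. Evaluating
  \<open>d\<omega>(X, Y) = X(\<omega>(Y)) - Y(\<omega>(X))\<close> in this frame reduces the structure equations to identities between
  frame derivatives of \<open>A\<^sup>j\<close>, \<open>l\<close> and \<open>k\<close>. These come from the commutators of the fields: the
  definitions of \<open>l\<close> and \<open>k\<close> give \<open>[L\<^sub>j, L\<^sub>1-bar]\<close>, integrability (\<open>L\<^sub>1, L\<^sub>2\<close> annihilate \<open>w\<close>-bar) gives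
  \<open>[L\<^sub>1, L\<^sub>2] = 0\<close>, singularity of the Levi matrix gives \<open>[L\<^sub>2, L\<^sub>2-bar]\<close>, and the Jacobi identity then
  yields \<open>K-bar(k) = 0\<close> and the derivatives of \<open>K l\<close>, \<open>K P\<close> and \<open>K P-bar\<close>. What remains is a rational
  identity in the values of these derivatives at the point. Mixed second derivatives commute because
  all functions involved are smooth.\<close>

section \<open>Directional derivatives\<close>

lemma has_derivative_dirD:
  "f differentiable (at x) \<Longrightarrow> (f has_derivative (\<lambda>h. dirD f h x)) (at x)"
  unfolding dirD_def using frechet_derivative_works by (metis eta_contract_eq)

lemma dirD_eqI: "(f has_derivative f') (at x) \<Longrightarrow> dirD f h x = f' h"
  unfolding dirD_def using frechet_derivative_at by metis

lemma linear_dirD: "f differentiable (at x) \<Longrightarrow> linear (\<lambda>h. dirD f h x)"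
  using has_derivative_dirD has_derivative_linear by blast

lemma dirD_const [simp]: "dirD (\<lambda>y. c) h x = 0"
  by (rule dirD_eqI[of _ "\<lambda>_. 0", simplified]) (rule has_derivative_const)

lemma dirD_linear: "bounded_linear l \<Longrightarrow> dirD l h x = l h"
  by (rule dirD_eqI) (rule bounded_linear_imp_has_derivative)

lemma dirD_add:
  "f differentiable (at x) \<Longrightarrow> g differentiable (at x) \<Longrightarrow>
   dirD (\<lambda>y. f y + g y) h x = dirD f h x + dirD g h x"
  by (rule dirD_eqI[of _ "\<lambda>h. dirD f h x + dirD g h x", simplified])
     (intro has_derivative_add has_derivative_dirD)

lemma dirD_diff:
  "f differentiable (at x) \<Longrightarrow> g differentiable (at x) \<Longrightarrow>
   dirD (\<lambda>y. f y - g y) h x = dirD f h x - dirD g h x"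
  by (rule dirD_eqI[of _ "\<lambda>h. dirD f h x - dirD g h x", simplified])
     (intro has_derivative_diff has_derivative_dirD)

lemma dirD_sum:
  assumes "finite I" "\<And>i. i \<in> I \<Longrightarrow> f i differentiable (at x)"
  shows "dirD (\<lambda>y. \<Sum>i\<in>I. f i y) h x = (\<Sum>i\<in>I. dirD (f i) h x)"
  by (rule dirD_eqI[of _ "\<lambda>h. \<Sum>i\<in>I. dirD (f i) h x"])
     (use assms in \<open>auto intro!: has_derivative_sum has_derivative_dirD\<close>)

lemma dirD_mult:
  fixes f g :: "'a::real_normed_vector \<Rightarrow> 'b::real_normed_algebra"
  shows "f differentiable (at x) \<Longrightarrow> g differentiable (at x) \<Longrightarrow>
   dirD (\<lambda>y. f y * g y) h x = f x * dirD g h x + dirD f h x * g x"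
  by (rule dirD_eqI[of _ "\<lambda>h. f x * dirD g h x + dirD f h x * g x", simplified])
     (intro has_derivative_mult has_derivative_dirD)

lemma dirD_inverse:
  fixes f :: "'a::real_normed_vector \<Rightarrow> 'b::real_normed_div_algebra"
  shows "f differentiable (at x) \<Longrightarrow> f x \<noteq> 0 \<Longrightarrow>
   dirD (\<lambda>y. inverse (f y)) h x = - (inverse (f x) * dirD f h x * inverse (f x))"
  by (rule dirD_eqI[of _ "\<lambda>h. - (inverse (f x) * dirD f h x * inverse (f x))", simplified])
     (rule Deriv.has_derivative_inverse[OF _ has_derivative_dirD])

lemma dirD_cnj:
  fixes f :: "'a::real_normed_vector \<Rightarrow> complex"
  shows "f differentiable (at x) \<Longrightarrow> dirD (\<lambda>y. cnj (f y)) h x = cnj (dirD f h x)"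
  by (rule dirD_eqI[of _ "\<lambda>h. cnj (dirD f h x)", simplified])
     (intro has_derivative_cnj has_derivative_dirD)

lemma dirD_of_real:
  fixes G :: "'a::real_normed_vector \<Rightarrow> real"
  shows "G differentiable (at x) \<Longrightarrow>
   dirD (\<lambda>y. complex_of_real (G y)) h x = complex_of_real (dirD G h x)"
  by (rule dirD_eqI[of _ "\<lambda>h. complex_of_real (dirD G h x)", simplified])
     (intro has_derivative_of_real has_derivative_dirD)

lemma dirD_cong:
  assumes "f differentiable (at x)" "open U" "x \<in> U" "\<And>y. y \<in> U \<Longrightarrow> f y = g y"
  shows "dirD f h x = dirD g h x"
  unfolding dirD_def using frechet_derivative_transform_within_open[OF assms] by simp

section \<open>The algebra of smooth functions\<close>

text \<open>The closure of \<^const>\<open>smooth_on\<close> under the algebraic operations; by \<open>smooth_fn_dirD\<close> it is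
  still closed under differentiation.\<close>

inductive smooth_fn :: "'a::real_normed_vector set \<Rightarrow> ('a \<Rightarrow> complex) \<Rightarrow> bool" for U where
  base: "smooth_on U f \<Longrightarrow> smooth_fn U f"
| of_real: "smooth_on U G \<Longrightarrow> smooth_fn U (\<lambda>x. complex_of_real (G x))"
| const: "smooth_fn U (\<lambda>x. c)"
| linear: "bounded_linear l \<Longrightarrow> smooth_fn U l"
| add: "smooth_fn U f \<Longrightarrow> smooth_fn U g \<Longrightarrow> smooth_fn U (\<lambda>x. f x + g x)"
| mult: "smooth_fn U f \<Longrightarrow> smooth_fn U g \<Longrightarrow> smooth_fn U (\<lambda>x. f x * g x)"
| inverse: "smooth_fn U f \<Longrightarrow> (\<forall>x\<in>U. f x \<noteq> 0) \<Longrightarrow> smooth_fn U (\<lambda>x. inverse (f x))"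
| cnj: "smooth_fn U f \<Longrightarrow> smooth_fn U (\<lambda>x. cnj (f x))"
| cong: "smooth_fn U f \<Longrightarrow> (\<forall>x\<in>U. f x = g x) \<Longrightarrow> smooth_fn U g"

lemma smooth_on_differentiable: "smooth_on U f \<Longrightarrow> open U \<Longrightarrow> x \<in> U \<Longrightarrow> f differentiable (at x)"
  by (erule smooth_on.cases) (auto simp: differentiable_on_eq_differentiable_at)

lemma smooth_on_dirD: "smooth_on U f \<Longrightarrow> smooth_on U (dirD f h)"
  by (erule smooth_on.cases) auto

lemma smooth_fn_differentiable:
  assumes "open U" "smooth_fn U f" "x \<in> U"
  shows "f differentiable (at x)"
  using assms(2,3)
proof (induction rule: smooth_fn.induct)
  case (of_real G)
  then show ?case
    using has_derivative_of_real[OF has_derivative_dirD] smooth_on_differentiable[OF _ assms(1)]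
    unfolding differentiable_def by blast
next
  case (cnj f)
  then show ?case using has_derivative_cnj[OF has_derivative_dirD] unfolding differentiable_def by blast
next
  case (cong f g)
  then show ?case
    using has_derivative_transform_within_open[OF _ assms(1)] unfolding differentiable_def by metis
qed (use smooth_on_differentiable[OF _ assms(1)] bounded_linear_imp_differentiable in
      \<open>auto intro: differentiable_add differentiable_mult differentiable_inverse\<close>)

lemma smooth_fn_dirD:
  assumes "open U" "smooth_fn U f"
  shows "smooth_fn U (dirD f h)"
  using assms(2)
proof (induction rule: smooth_fn.induct)
  case (base f)
  then show ?case using smooth_on_dirD smooth_fn.base by blast
next
  case (of_real G)
  have "\<forall>x\<in>U. G differentiable (at x)" using smooth_on_differentiable[OF of_real assms(1)] by blast
  show ?case
  proof (rule smooth_fn.cong)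
    show "smooth_fn U (\<lambda>x. complex_of_real (dirD G h x))"
      using smooth_fn.of_real[OF smooth_on_dirD[OF of_real]] .
  qed (use \<open>\<forall>x\<in>U. G differentiable (at x)\<close> in \<open>simp add: dirD_of_real\<close>)
next
  case (linear l)
  then show ?case by (simp add: dirD_linear smooth_fn.const)
next
  case (add f g)
  show ?case
    by (rule smooth_fn.cong[OF smooth_fn.add[of _ "dirD f h" "dirD g h"]])
       (use add in \<open>simp_all add: dirD_add smooth_fn_differentiable[OF assms(1)]\<close>)
next
  case (mult f g)
  show ?case
  proof (rule smooth_fn.cong)
    show "smooth_fn U (\<lambda>x. f x * dirD g h x + dirD f h x * g x)"
      using mult by (intro smooth_fn.add smooth_fn.mult)
  qed (use mult in \<open>simp add: dirD_mult smooth_fn_differentiable[OF assms(1)]\<close>)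
next
  case (inverse f)
  show ?case
  proof (rule smooth_fn.cong)
    show "smooth_fn U (\<lambda>x. (- 1) * (inverse (f x) * dirD f h x * inverse (f x)))"
      using inverse by (intro smooth_fn.mult smooth_fn.const smooth_fn.inverse)
  qed (use inverse in \<open>simp add: dirD_inverse smooth_fn_differentiable[OF assms(1)]\<close>)
next
  case (cnj f)
  show ?case
    by (rule smooth_fn.cong[OF smooth_fn.cnj[of _ "dirD f h"]])
       (use cnj in \<open>simp_all add: dirD_cnj smooth_fn_differentiable[OF assms(1)]\<close>)
next
  case (cong f g)
  have "dirD f h x = dirD g h x" if "x \<in> U" for x
    using dirD_cong[OF smooth_fn_differentiable[OF assms(1) cong.hyps(1) that] assms(1) that] cong.hyps(2)
    by blast
  then show ?case using smooth_fn.cong[OF cong.IH] by blast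
qed (simp add: smooth_fn.const)

lemma smooth_fn_sum: "finite I \<Longrightarrow> (\<And>i. i \<in> I \<Longrightarrow> smooth_fn U (f i)) \<Longrightarrow> smooth_fn U (\<lambda>y. \<Sum>i\<in>I. f i y)"
proof (induction I rule: finite_induct)
  case empty
  then show ?case using smooth_fn.const[of U 0] by simp
next
  case (insert a I)
  then show ?case using smooth_fn.add[of U "f a" "\<lambda>y. \<Sum>i\<in>I. f i y"] by simp
qed

lemma smooth_fn_minus: "smooth_fn U f \<Longrightarrow> smooth_fn U (\<lambda>x. - f x)"
  using smooth_fn.cong[OF smooth_fn.mult[OF smooth_fn.const[of U "- 1"]]] by simp

lemma smooth_fn_diff: "smooth_fn U f \<Longrightarrow> smooth_fn U g \<Longrightarrow> smooth_fn U (\<lambda>x. f x - g x)"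
proof -
  assume "smooth_fn U f" "smooth_fn U g"
  then have "smooth_fn U (\<lambda>x. f x + - g x)" by (intro smooth_fn.add smooth_fn_minus)
  then show ?thesis by (rule smooth_fn.cong) simp
qed

lemma smooth_fn_divide:
  "smooth_fn U f \<Longrightarrow> smooth_fn U g \<Longrightarrow> \<forall>x\<in>U. g x \<noteq> 0 \<Longrightarrow> smooth_fn U (\<lambda>x. f x / g x)"
  by (rule smooth_fn.cong[of _ "\<lambda>x. f x * inverse (g x)"])
     (auto intro: smooth_fn.mult smooth_fn.inverse simp: divide_inverse)

section \<open>Symmetry of second directional derivatives\<close>

lemma has_derivative_along_line:
  assumes "f differentiable (at (a + s *\<^sub>R h))"
  shows "((\<lambda>s. f (a + s *\<^sub>R h)) has_derivative (\<lambda>d. d *\<^sub>R dirD f h (a + s *\<^sub>R h))) (at s)"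
proof -
  have "((\<lambda>s. a + s *\<^sub>R h) has_derivative (\<lambda>d. d *\<^sub>R h)) (at s)"
    by (auto intro!: derivative_eq_intros)
  from has_derivative_compose[OF this has_derivative_dirD[OF assms]] show ?thesis
    by (simp add: linear_scale[OF linear_dirD[OF assms]])
qed

lemma mvt_deviation:
  fixes \<phi> :: "real \<Rightarrow> 'b::real_inner"
  assumes "0 < t"
    and deriv: "\<And>s. s \<in> {0..t} \<Longrightarrow> (\<phi> has_derivative (\<lambda>d. d *\<^sub>R \<phi>' s)) (at s)"
    and bound: "\<And>s. s \<in> {0<..<t} \<Longrightarrow> norm (\<phi>' s - c) \<le> e"
  shows "norm (\<phi> t - \<phi> 0 - t *\<^sub>R c) \<le> t * e"
proof -
  define \<psi> where "\<psi> s = \<phi> s - s *\<^sub>R c" for s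
  have d\<psi>: "(\<psi> has_derivative (\<lambda>d. d *\<^sub>R (\<phi>' s - c))) (at s)" if "s \<in> {0..t}" for s
    unfolding \<psi>_def using deriv[OF that]
    by (auto intro!: derivative_eq_intros simp: scaleR_diff_right)
  have "continuous_on {0..t} \<psi>"
    using d\<psi> by (intro has_derivative_continuous_on) (blast intro: has_derivative_at_withinI)
  then obtain \<sigma> where "\<sigma> \<in> {0<..<t}" and "norm (\<psi> t - \<psi> 0) \<le> norm ((t - 0) *\<^sub>R (\<phi>' \<sigma> - c))"
    using mvt_general[OF \<open>0 < t\<close>, of \<psi> "\<lambda>s d. d *\<^sub>R (\<phi>' s - c)"] d\<psi> by auto
  moreover have "norm ((t - 0) *\<^sub>R (\<phi>' \<sigma> - c)) \<le> t * e"
    using bound[OF \<open>\<sigma> \<in> {0<..<t}\<close>] \<open>0 < t\<close> by (simp add: mult_left_mono)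
  ultimately show ?thesis
    unfolding \<psi>_def by (simp add: algebra_simps)
qed

lemma second_difference_estimate:
  fixes f :: "'a::real_normed_vector \<Rightarrow> 'b::real_inner"
  assumes "0 < t"
    and df: "\<And>s \<tau>. s \<in> {0..t} \<Longrightarrow> \<tau> \<in> {0..t} \<Longrightarrow> f differentiable (at (x + s *\<^sub>R h + \<tau> *\<^sub>R k))"
    and dfh: "\<And>s \<tau>. s \<in> {0..t} \<Longrightarrow> \<tau> \<in> {0..t} \<Longrightarrow> dirD f h differentiable (at (x + s *\<^sub>R h + \<tau> *\<^sub>R k))"
    and bound: "\<And>s \<tau>. s \<in> {0..t} \<Longrightarrow> \<tau> \<in> {0..t} \<Longrightarrow>
                  norm (dirD (dirD f h) k (x + s *\<^sub>R h + \<tau> *\<^sub>R k) - c) \<le> e"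
  shows "norm (f (x + t *\<^sub>R h + t *\<^sub>R k) - f (x + t *\<^sub>R h) - f (x + t *\<^sub>R k) + f x - (t * t) *\<^sub>R c)
           \<le> t * (t * e)"
proof -
  have inner: "norm (dirD f h (x + \<sigma> *\<^sub>R h + t *\<^sub>R k) - dirD f h (x + \<sigma> *\<^sub>R h) - t *\<^sub>R c) \<le> t * e"
    if "\<sigma> \<in> {0..t}" for \<sigma>
    using mvt_deviation[OF \<open>0 < t\<close>, of "\<lambda>\<tau>. dirD f h ((x + \<sigma> *\<^sub>R h) + \<tau> *\<^sub>R k)"
        "\<lambda>\<tau>. dirD (dirD f h) k ((x + \<sigma> *\<^sub>R h) + \<tau> *\<^sub>R k)" c e] that
    by (simp add: has_derivative_along_line dfh bound)
  have "((\<lambda>s. f ((x + t *\<^sub>R k) + s *\<^sub>R h) - f (x + s *\<^sub>R h)) has_derivative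
         (\<lambda>d. d *\<^sub>R (dirD f h (x + s *\<^sub>R h + t *\<^sub>R k) - dirD f h (x + s *\<^sub>R h)))) (at s)"
    if "s \<in> {0..t}" for s
  proof -
    have "f differentiable (at ((x + t *\<^sub>R k) + s *\<^sub>R h))"
      using df[of s t] that \<open>0 < t\<close> by (simp add: add_ac)
    from has_derivative_diff[OF has_derivative_along_line[OF this] has_derivative_along_line]
    show ?thesis using df[of s 0] that by (simp add: add_ac scaleR_diff_right)
  qed
  from mvt_deviation[OF \<open>0 < t\<close> this inner]
  show ?thesis by (simp add: algebra_simps)
qed

lemma parallelogram_in_ball:
  fixes x h k :: "'a::real_normed_vector" and m s \<tau> :: real
  defines "t \<equiv> m / (2 * (norm h + norm k + 1))"
  assumes "0 < m" "s \<in> {0..t}" "\<tau> \<in> {0..t}"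
  shows "x + s *\<^sub>R h + \<tau> *\<^sub>R k \<in> ball x m"
proof -
  have "norm (s *\<^sub>R h + \<tau> *\<^sub>R k) \<le> s * norm h + \<tau> * norm k"
    using assms(3,4) norm_triangle_ineq[of "s *\<^sub>R h" "\<tau> *\<^sub>R k"] by simp
  also have "\<dots> \<le> t * (norm h + norm k)"
    using assms(3,4) by (simp add: distrib_left add_mono mult_right_mono)
  also have "\<dots> < m"
  proof -
    have "m / (2 * (N + 1)) * N < m" if "0 \<le> N" for N :: real
      using that assms(2) by (simp add: field_simps add_nonneg_pos)
    from this[of "norm h + norm k"] show ?thesis unfolding t_def by (simp add: mult.commute)
  qed
  finally show ?thesis
    by (subst mem_ball, subst dist_commute) (simp add: dist_norm add.assoc)
qed

lemma dirD_commute: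
  fixes f :: "'a::real_normed_vector \<Rightarrow> 'b::real_inner"
  assumes U: "open U" "x \<in> U"
    and d: "\<forall>y\<in>U. f differentiable (at y)" "\<forall>y\<in>U. dirD f h differentiable (at y)"
      "\<forall>y\<in>U. dirD f k differentiable (at y)"
    and c: "isCont (dirD (dirD f h) k) x" "isCont (dirD (dirD f k) h) x"
  shows "dirD (dirD f h) k x = dirD (dirD f k) h x"
proof -
  define a where "a = dirD (dirD f h) k x"
  define b where "b = dirD (dirD f k) h x"
  have close: "norm (a - b) \<le> 2 * e" if "e > 0" for e
  proof -
    obtain r where "r > 0" "ball x r \<subseteq> U" using U open_contains_ball by blast
    obtain d1 where "d1 > 0" "\<And>y. dist y x < d1 \<Longrightarrow> dist (dirD (dirD f h) k y) a < e"
      using c(1) \<open>e > 0\<close> unfolding continuous_at_eps_delta a_def by blast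
    moreover obtain d2 where "d2 > 0" "\<And>y. dist y x < d2 \<Longrightarrow> dist (dirD (dirD f k) h y) b < e"
      using c(2) \<open>e > 0\<close> unfolding continuous_at_eps_delta b_def by blast
    ultimately obtain m where m: "m > 0" "ball x m \<subseteq> U"
      "\<And>y. y \<in> ball x m \<Longrightarrow> norm (dirD (dirD f h) k y - a) \<le> e \<and> norm (dirD (dirD f k) h y - b) \<le> e"
      using \<open>r > 0\<close> \<open>ball x r \<subseteq> U\<close>
      by (intro that[of "min r (min d1 d2)"]) (auto simp: dist_norm norm_minus_commute less_imp_le)
    define t where "t = m / (2 * (norm h + norm k + 1))"
    have "t > 0" unfolding t_def using m(1) by (simp add: add_nonneg_pos)
    have near: "x + s *\<^sub>R h + \<tau> *\<^sub>R k \<in> ball x m" if "s \<in> {0..t}" "\<tau> \<in> {0..t}" for s \<tau>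
      using parallelogram_in_ball[OF m(1)] that unfolding t_def .
    let ?\<Delta> = "f (x + t *\<^sub>R h + t *\<^sub>R k) - f (x + t *\<^sub>R h) - f (x + t *\<^sub>R k) + f x"
    have "norm (?\<Delta> - (t * t) *\<^sub>R a) \<le> t * (t * e)"
      using near m d \<open>t > 0\<close> by (intro second_difference_estimate) blast+
    moreover have "norm (?\<Delta> - (t * t) *\<^sub>R b) \<le> t * (t * e)"
    proof -
      have "x + s *\<^sub>R k + \<tau> *\<^sub>R h \<in> ball x m" if "s \<in> {0..t}" "\<tau> \<in> {0..t}" for s \<tau>
        using near[OF that(2,1)] by (simp add: add_ac)
      then have "norm (f (x + t *\<^sub>R k + t *\<^sub>R h) - f (x + t *\<^sub>R k) - f (x + t *\<^sub>R h) + f x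
                   - (t * t) *\<^sub>R b) \<le> t * (t * e)"
        using m d \<open>t > 0\<close> by (intro second_difference_estimate) blast+
      then show ?thesis by (simp add: algebra_simps)
    qed
    ultimately have "norm ((t * t) *\<^sub>R (a - b)) \<le> 2 * (t * (t * e))"
      using norm_triangle_ineq4[of "?\<Delta> - (t * t) *\<^sub>R b" "?\<Delta> - (t * t) *\<^sub>R a"]
      by (simp add: algebra_simps)
    with \<open>t > 0\<close> show ?thesis by (simp add: mult.assoc)
  qed
  have "norm (a - b) \<le> 0 + e" if "e > 0" for e
    using close[of "e / 2"] that by simp
  then have "norm (a - b) \<le> 0" by (rule field_le_epsilon)
  then show ?thesis unfolding a_def b_def by simp
qed

lemma smooth_fn_dirD_commute:
  assumes "open U" "smooth_fn U f" "x \<in> U"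
  shows "dirD (dirD f h) k x = dirD (dirD f k) h x"
proof (rule dirD_commute[OF assms(1,3)])
  have "smooth_fn U (dirD (dirD f h) k)" "smooth_fn U (dirD (dirD f k) h)"
    using smooth_fn_dirD[OF assms(1)] assms(2) by blast+
  then show "isCont (dirD (dirD f h) k) x" "isCont (dirD (dirD f k) h) x"
    using smooth_fn_differentiable[OF assms(1) _ assms(3)] differentiable_imp_continuous_within by blast+
qed (use smooth_fn_differentiable[OF assms(1)] smooth_fn_dirD[OF assms(1)] assms(2) in blast)+

section \<open>Complex vector fields in real coordinates\<close>

text \<open>The real coordinate directions of \<open>x\<^sub>1, y\<^sub>1, x\<^sub>2, y\<^sub>2, v\<close>, in this order.\<close>

definition coord_dir :: "nat \<Rightarrow> pt" where
  "coord_dir i = (if i = 0 then (1, 0, 0) else if i = 1 then (\<i>, 0, 0) else if i = 2 then (0, 1, 0)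
                  else if i = 3 then (0, \<i>, 0) else (0, 0, 1))"

definition vfield :: "(nat \<Rightarrow> pt \<Rightarrow> complex) \<Rightarrow> (pt \<Rightarrow> complex) \<Rightarrow> pt \<Rightarrow> complex" where
  "vfield a g x = (\<Sum>i<5. a i x * dirD g (coord_dir i) x)"

lemma sum_lessThan_5: "(\<Sum>i<(5::nat). f i) = f 0 + f 1 + f 2 + f 3 + (f 4 :: 'a::comm_monoid_add)"
  by (simp add: eval_nat_numeral ac_simps)

lemma vfield_coords:
  "vfield a g x = a 0 x * dx1 g x + a 1 x * dy1 g x + a 2 x * dx2 g x + a 3 x * dy2 g x + a 4 x * dv g x"
  by (simp add: vfield_def sum_lessThan_5 coord_dir_def dx1_def dy1_def dx2_def dy2_def dv_def)

lemma vfield_const [simp]: "vfield a (\<lambda>y. c) x = 0"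
  by (simp add: vfield_def)

lemma vfield_add:
  "f differentiable (at x) \<Longrightarrow> g differentiable (at x) \<Longrightarrow>
   vfield a (\<lambda>y. f y + g y) x = vfield a f x + vfield a g x"
  by (simp add: vfield_def dirD_add distrib_left sum.distrib)

lemma vfield_diff:
  "f differentiable (at x) \<Longrightarrow> g differentiable (at x) \<Longrightarrow>
   vfield a (\<lambda>y. f y - g y) x = vfield a f x - vfield a g x"
  by (simp add: vfield_def dirD_diff right_diff_distrib sum_subtractf)

lemma vfield_mult:
  "f differentiable (at x) \<Longrightarrow> g differentiable (at x) \<Longrightarrow>
   vfield a (\<lambda>y. f y * g y) x = f x * vfield a g x + g x * vfield a f x"
  by (simp add: vfield_def dirD_mult distrib_left sum.distrib sum_distrib_left algebra_simps)

lemma vfield_divide: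
  assumes "f differentiable (at x)" "g differentiable (at x)" "g x \<noteq> 0"
  shows "vfield a (\<lambda>y. f y / g y) x = (g x * vfield a f x - f x * vfield a g x) / (g x * g x)"
proof -
  have "vfield a (\<lambda>y. inverse (g y)) x =
      (\<Sum>i<5. a i x * - (inverse (g x) * dirD g (coord_dir i) x * inverse (g x)))"
    unfolding vfield_def by (simp only: dirD_inverse[OF assms(2,3)])
  also have "\<dots> = - vfield a g x / (g x * g x)"
    unfolding vfield_def sum_divide_distrib sum_negf[symmetric]
    by (rule sum.cong) (simp_all add: field_simps)
  finally have inv: "vfield a (\<lambda>y. inverse (g y)) x = - vfield a g x / (g x * g x)" .
  have "vfield a (\<lambda>y. f y / g y) x = f x * vfield a (\<lambda>y. inverse (g y)) x + inverse (g x) * vfield a f x"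
    using assms vfield_mult[of f x "\<lambda>y. inverse (g y)"]
    by (simp add: divide_inverse differentiable_inverse)
  with inv show ?thesis using assms(3) by (simp add: field_simps)
qed

lemma vfield_cong:
  "f differentiable (at x) \<Longrightarrow> open U \<Longrightarrow> x \<in> U \<Longrightarrow> (\<And>y. y \<in> U \<Longrightarrow> f y = g y) \<Longrightarrow>
   vfield a f x = vfield a g x"
  unfolding vfield_def using dirD_cong[of f x U g] by simp

lemma smooth_fn_vfield:
  "open U \<Longrightarrow> (\<And>i. i < 5 \<Longrightarrow> smooth_fn U (a i)) \<Longrightarrow> smooth_fn U g \<Longrightarrow> smooth_fn U (vfield a g)"
  unfolding vfield_def[abs_def] by (intro smooth_fn_sum smooth_fn.mult smooth_fn_dirD) auto

lemma dirD_vfield: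
  assumes U: "open U" "x \<in> U" and a: "\<And>i. i < 5 \<Longrightarrow> smooth_fn U (a i)" and g: "smooth_fn U g"
  shows "dirD (vfield a g) h x =
    (\<Sum>i<5. dirD (a i) h x * dirD g (coord_dir i) x + a i x * dirD (dirD g (coord_dir i)) h x)"
proof -
  have da: "a i differentiable (at x)" if "i < 5" for i
    using smooth_fn_differentiable[OF U(1) a[OF that] U(2)] .
  have dg: "dirD g k differentiable (at x)" for k
    using smooth_fn_differentiable[OF U(1) smooth_fn_dirD[OF U(1) g] U(2)] .
  have "dirD (vfield a g) h x = (\<Sum>i<5. dirD (\<lambda>y. a i y * dirD g (coord_dir i) y) h x)"
    unfolding vfield_def by (rule dirD_sum) (simp_all add: da dg differentiable_mult)
  also have "\<dots> = (\<Sum>i<5. dirD (a i) h x * dirD g (coord_dir i) x + a i x * dirD (dirD g (coord_dir i)) h x)"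
    by (rule sum.cong) (simp_all add: da dg dirD_mult)
  finally show ?thesis .
qed

text \<open>The second-order terms of a commutator cancel by the symmetry of second derivatives.\<close>

lemma vfield_commutator:
  assumes U: "open U" "x \<in> U" and a: "\<And>i. i < 5 \<Longrightarrow> smooth_fn U (a i)"
    and b: "\<And>i. i < 5 \<Longrightarrow> smooth_fn U (b i)" and g: "smooth_fn U g"
  shows "vfield a (vfield b g) x - vfield b (vfield a g) x =
    (\<Sum>i<5. (vfield a (b i) x - vfield b (a i) x) * dirD g (coord_dir i) x)"
proof -
  define dd where "dd i j = dirD (dirD g (coord_dir i)) (coord_dir j) x" for i j
  have dd_sym: "dd i j = dd j i" for i j
    unfolding dd_def using smooth_fn_dirD_commute[OF U(1) g U(2)] by simp
  have expand: "vfield a (vfield b g) x =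
      (\<Sum>i<5. vfield a (b i) x * dirD g (coord_dir i) x) + (\<Sum>j<5. \<Sum>i<5. a j x * b i x * dd i j)"
    if a: "\<And>i. i < 5 \<Longrightarrow> smooth_fn U (a i)" and b: "\<And>i. i < 5 \<Longrightarrow> smooth_fn U (b i)" for a b
  proof -
    have "vfield a (vfield b g) x =
        (\<Sum>j<5. a j x * (\<Sum>i<5. dirD (b i) (coord_dir j) x * dirD g (coord_dir i) x + b i x * dd i j))"
      unfolding vfield_def[of a] dd_def using dirD_vfield[OF U b g] by simp
    also have "\<dots> = (\<Sum>j<5. \<Sum>i<5. a j x * dirD (b i) (coord_dir j) x * dirD g (coord_dir i) x)
        + (\<Sum>j<5. \<Sum>i<5. a j x * b i x * dd i j)"
      by (simp add: sum_distrib_left distrib_left sum.distrib mult.assoc)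
    also have "(\<Sum>j<5. \<Sum>i<5. a j x * dirD (b i) (coord_dir j) x * dirD g (coord_dir i) x)
        = (\<Sum>i<5. vfield a (b i) x * dirD g (coord_dir i) x)"
      by (subst sum.swap) (simp add: vfield_def sum_distrib_right)
    finally show ?thesis .
  qed
  have "(\<Sum>j<5. \<Sum>i<5. a j x * b i x * dd i j) = (\<Sum>j<5. \<Sum>i<5. b j x * a i x * dd i j)"
    by (subst sum.swap) (simp add: dd_sym mult.commute)
  then show ?thesis using expand[OF a b] expand[OF b a]
    by (simp add: left_diff_distrib sum_subtractf)
qed

section \<open>Vector fields with smooth coefficients act as derivations\<close>

definition is_vfield :: "pt set \<Rightarrow> ((pt \<Rightarrow> complex) \<Rightarrow> pt \<Rightarrow> complex) \<Rightarrow> bool" where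
  "is_vfield U D \<longleftrightarrow> (\<exists>a. (\<forall>i<5. smooth_fn U (a i)) \<and> (\<forall>g x. D g x = vfield a g x))"

context
  fixes U :: "pt set"
  assumes U: "open U"
begin

lemma is_vfieldE:
  assumes "is_vfield U D"
  obtains a where "\<And>i. i < 5 \<Longrightarrow> smooth_fn U (a i)" "\<And>g x. D g x = vfield a g x"
  using assms unfolding is_vfield_def by blast

lemma derivation_smooth: "is_vfield U D \<Longrightarrow> smooth_fn U g \<Longrightarrow> smooth_fn U (D g)"
  by (erule is_vfieldE) (metis smooth_fn.cong smooth_fn_vfield[OF U])

lemma derivation_add:
  "is_vfield U D \<Longrightarrow> smooth_fn U f \<Longrightarrow> smooth_fn U g \<Longrightarrow> x \<in> U \<Longrightarrow>
   D (\<lambda>y. f y + g y) x = D f x + D g x"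
  by (erule is_vfieldE) (simp add: vfield_add smooth_fn_differentiable[OF U])

lemma derivation_diff:
  "is_vfield U D \<Longrightarrow> smooth_fn U f \<Longrightarrow> smooth_fn U g \<Longrightarrow> x \<in> U \<Longrightarrow>
   D (\<lambda>y. f y - g y) x = D f x - D g x"
  by (erule is_vfieldE) (simp add: vfield_diff smooth_fn_differentiable[OF U])

lemma derivation_mult:
  "is_vfield U D \<Longrightarrow> smooth_fn U f \<Longrightarrow> smooth_fn U g \<Longrightarrow> x \<in> U \<Longrightarrow>
   D (\<lambda>y. f y * g y) x = f x * D g x + g x * D f x"
  by (erule is_vfieldE) (simp add: vfield_mult smooth_fn_differentiable[OF U])

lemma derivation_const: "is_vfield U D \<Longrightarrow> D (\<lambda>y. c) x = 0"
  by (erule is_vfieldE) simp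

lemma derivation_minus:
  "is_vfield U D \<Longrightarrow> smooth_fn U f \<Longrightarrow> x \<in> U \<Longrightarrow> D (\<lambda>y. - f y) x = - D f x"
  using derivation_mult[of D "\<lambda>_. - 1" f x] by (simp add: smooth_fn.const derivation_const)

lemma derivation_divide:
  "is_vfield U D \<Longrightarrow> smooth_fn U f \<Longrightarrow> smooth_fn U g \<Longrightarrow> x \<in> U \<Longrightarrow> g x \<noteq> 0 \<Longrightarrow>
   D (\<lambda>y. f y / g y) x = (g x * D f x - f x * D g x) / (g x * g x)"
  by (erule is_vfieldE) (simp add: vfield_divide smooth_fn_differentiable[OF U])

lemma derivation_cong:
  "is_vfield U D \<Longrightarrow> smooth_fn U f \<Longrightarrow> x \<in> U \<Longrightarrow> (\<And>y. y \<in> U \<Longrightarrow> f y = g y) \<Longrightarrow> D f x = D g x"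
  by (erule is_vfieldE) (metis vfield_cong smooth_fn_differentiable[OF U] U)

lemma derivation_vanishing:
  "is_vfield U D \<Longrightarrow> x \<in> U \<Longrightarrow> (\<And>y. y \<in> U \<Longrightarrow> f y = 0) \<Longrightarrow> D f x = 0"
  using derivation_cong[of D "\<lambda>_. 0" x f] smooth_fn.const derivation_const by metis

lemma is_vfield_add:
  assumes "is_vfield U D\<^sub>1" "is_vfield U D\<^sub>2"
  shows "is_vfield U (\<lambda>g x. D\<^sub>1 g x + D\<^sub>2 g x)"
proof -
  obtain a where a: "\<And>i. i < 5 \<Longrightarrow> smooth_fn U (a i)" "\<And>g x. D\<^sub>1 g x = vfield a g x"
    using is_vfieldE[OF assms(1)] by blast
  obtain b where b: "\<And>i. i < 5 \<Longrightarrow> smooth_fn U (b i)" "\<And>g x. D\<^sub>2 g x = vfield b g x"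
    using is_vfieldE[OF assms(2)] by blast
  show ?thesis unfolding is_vfield_def
  proof (intro exI conjI allI impI)
    show "smooth_fn U (\<lambda>x. a i x + b i x)" if "i < 5" for i
      using a b that by (intro smooth_fn.add) auto
    show "D\<^sub>1 g x + D\<^sub>2 g x = vfield (\<lambda>i x. a i x + b i x) g x" for g x
      unfolding a(2) b(2) vfield_def by (simp add: sum.distrib algebra_simps)
  qed
qed

lemma is_vfield_scale:
  assumes "is_vfield U D" "smooth_fn U c"
  shows "is_vfield U (\<lambda>g x. c x * D g x)"
proof -
  obtain a where a: "\<And>i. i < 5 \<Longrightarrow> smooth_fn U (a i)" "\<And>g x. D g x = vfield a g x"
    using is_vfieldE[OF assms(1)] by blast
  show ?thesis unfolding is_vfield_def
  proof (intro exI conjI allI impI)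
    show "smooth_fn U (\<lambda>x. c x * a i x)" if "i < 5" for i
      using a assms(2) that by (intro smooth_fn.mult) auto
    show "c x * D g x = vfield (\<lambda>i x. c x * a i x) g x" for g x
      unfolding a(2) vfield_def by (simp add: sum_distrib_left algebra_simps)
  qed
qed

end

definition vfield_coeffs :: "complex list \<Rightarrow> (pt \<Rightarrow> complex) \<Rightarrow> nat \<Rightarrow> pt \<Rightarrow> complex" where
  "vfield_coeffs cs a i = (if i < 4 then (\<lambda>_. cs ! i) else a)"

lemma is_vfield_coeffs: "smooth_fn U a \<Longrightarrow> is_vfield U (vfield (vfield_coeffs cs a))"
  unfolding is_vfield_def
  by (rule exI[of _ "vfield_coeffs cs a"]) (auto simp: vfield_coeffs_def intro: smooth_fn.const)

lemma vfield_coeffs_commutator: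
  fixes cs ds :: "complex list"
  assumes U: "open U" "x \<in> U" and "smooth_fn U a" "smooth_fn U b" "smooth_fn U g"
  defines "X \<equiv> vfield (vfield_coeffs cs a)" and "Y \<equiv> vfield (vfield_coeffs ds b)"
  shows "X (Y g) x - Y (X g) x = (X b x - Y a x) * dv g x"
proof -
  have coeffs: "smooth_fn U (vfield_coeffs cs a i)" "smooth_fn U (vfield_coeffs ds b i)" for i
    using assms(3,4) by (auto simp: vfield_coeffs_def intro: smooth_fn.const)
  have "X (Y g) x - Y (X g) x = (\<Sum>i<5. (X (vfield_coeffs ds b i) x - Y (vfield_coeffs cs a i) x)
                                        * dirD g (coord_dir i) x)"
    unfolding X_def Y_def by (rule vfield_commutator[OF U coeffs(1) coeffs(2) assms(5)])
  also have "\<dots> = (X b x - Y a x) * dv g x"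
    by (simp add: sum_lessThan_5 vfield_coeffs_def coord_dir_def dv_def X_def Y_def)
  finally show ?thesis .
qed

section \<open>The vector fields of the hypersurface\<close>

lemma det_eq_0_if_rank_1:
  fixes A :: "'a::field^2^2"
  assumes "rank A = 1"
  shows "det A = 0"
proof -
  obtain B where B: "B \<subseteq> rows A" "vec.independent B" "rows A \<subseteq> vec.span B" "card B = vec.dim (rows A)"
    using vec.basis_exists by blast
  then have "card B = 1" using assms unfolding row_rank_def_gen by simp
  then obtain v where v: "B = {v}" using card_1_singletonE by blast
  have "\<exists>c. A $ i = c *s v" for i
  proof -
    have "row i A \<in> vec.span {v}" using B v unfolding rows_def by blast
    then show ?thesis unfolding vec.span_singleton by (auto simp: row_def vec_eq_iff)
  qed
  then obtain c1 c2 where "A $ 1 = c1 *s v" "A $ 2 = c2 *s v" by metis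
  then show ?thesis unfolding det_2 by simp
qed

lemma L1op_vfield: "L1op F = vfield (vfield_coeffs [1/2, - \<i>/2, 0, 0] (A1 F))"
  by (intro ext) (simp add: vfield_coords vfield_coeffs_def L1op_def dz1_def algebra_simps diff_divide_distrib)

lemma Lb1op_vfield: "Lb1op F = vfield (vfield_coeffs [1/2, \<i>/2, 0, 0] (\<lambda>x. cnj (A1 F x)))"
  by (intro ext) (simp add: vfield_coords vfield_coeffs_def Lb1op_def dzb1_def algebra_simps add_divide_distrib)

lemma L2op_vfield: "L2op F = vfield (vfield_coeffs [0, 0, 1/2, - \<i>/2] (A2 F))"
  by (intro ext) (simp add: vfield_coords vfield_coeffs_def L2op_def dz2_def algebra_simps diff_divide_distrib)

lemma Lb2op_vfield: "Lb2op F = vfield (vfield_coeffs [0, 0, 1/2, \<i>/2] (\<lambda>x. cnj (A2 F x)))"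
  by (intro ext) (simp add: vfield_coords vfield_coeffs_def Lb2op_def dzb2_def algebra_simps add_divide_distrib)

lemma dv_vfield: "dv = vfield (vfield_coeffs [0, 0, 0, 0] (\<lambda>_. 1))"
  by (intro ext) (simp add: vfield_coords vfield_coeffs_def)

definition Kbop :: "(pt \<Rightarrow> real) \<Rightarrow> (pt \<Rightarrow> complex) \<Rightarrow> pt \<Rightarrow> complex" where
  "Kbop F g x = cnj (kk F x) * Lb1op F g x + Lb2op F g x"

text \<open>The restriction of \<open>w\<close> to \<open>M\<close> is \<open>F + i v\<close>; its conjugate is annihilated by the \<open>(1,0)\<close>-fields.\<close>

definition wbar :: "(pt \<Rightarrow> real) \<Rightarrow> pt \<Rightarrow> complex" where
  "wbar F q = Fc F q - \<i> * fv q"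

lemma bounded_linear_fv: "bounded_linear fv"
  unfolding fv_def[abs_def]
  by (intro bounded_linear_compose[OF bounded_linear_of_real]
      bounded_linear_compose[OF bounded_linear_snd] bounded_linear_snd)

lemma dirD_fv: "dirD fv h x = fv h"
  using dirD_linear[OF bounded_linear_fv] .

locale levi_rank_one =
  fixes F :: "pt \<Rightarrow> real" and U :: "pt set"
  assumes open_U: "open U" and smooth_F: "smooth_on U F"
    and ell_nonzero: "\<And>x. x \<in> U \<Longrightarrow> ell F x \<noteq> 0"
    and levi_rank: "\<And>x. x \<in> U \<Longrightarrow> rank (levi F x) = 1"
    and Lb1_k_nonzero: "\<And>x. x \<in> U \<Longrightarrow> Lb1op F (kk F) x \<noteq> 0"
begin

abbreviation "a1 \<equiv> A1 F"
abbreviation "a2 \<equiv> A2 F"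
abbreviation "b1 \<equiv> \<lambda>q. cnj (A1 F q)"
abbreviation "b2 \<equiv> \<lambda>q. cnj (A2 F q)"
abbreviation "l \<equiv> ell F"
abbreviation "k \<equiv> kk F"
abbreviation "kb \<equiv> \<lambda>q. cnj (kk F q)"
abbreviation "P \<equiv> PP F"
abbreviation "Pb \<equiv> \<lambda>q. cnj (PP F q)"
abbreviation "L1 \<equiv> L1op F"
abbreviation "L2 \<equiv> L2op F"
abbreviation "Lb1 \<equiv> Lb1op F"
abbreviation "Lb2 \<equiv> Lb2op F"
abbreviation "K \<equiv> Kop F"
abbreviation "Kb \<equiv> Kbop F"
abbreviation "T \<equiv> Top F"

lemma smooth_Fc: "smooth_fn U (Fc F)"
  unfolding Fc_def[abs_def] by (rule smooth_fn.of_real[OF smooth_F])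

lemma smooth_dv: "smooth_fn U g \<Longrightarrow> smooth_fn U (dv g)"
  unfolding dv_def by (rule smooth_fn_dirD[OF open_U])

lemma smooth_dz1: "smooth_fn U g \<Longrightarrow> smooth_fn U (dz1 g)"
  unfolding dz1_def[abs_def] dx1_def dy1_def
  by (intro smooth_fn_divide smooth_fn_diff smooth_fn.mult smooth_fn.const smooth_fn_dirD[OF open_U]) auto

lemma smooth_dz2: "smooth_fn U g \<Longrightarrow> smooth_fn U (dz2 g)"
  unfolding dz2_def[abs_def] dx2_def dy2_def
  by (intro smooth_fn_divide smooth_fn_diff smooth_fn.mult smooth_fn.const smooth_fn_dirD[OF open_U]) auto

lemma dv_Fc: "x \<in> U \<Longrightarrow> dv (Fc F) x = complex_of_real (dirD F (0, 0, 1) x)"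
  unfolding dv_def Fc_def[abs_def]
  by (rule dirD_of_real[OF smooth_on_differentiable[OF smooth_F open_U]])

lemma A_denominator_nonzero: "x \<in> U \<Longrightarrow> 1 + \<i> * dv (Fc F) x \<noteq> 0"
  using dv_Fc[of x] by (auto simp: complex_eq_iff)

lemma smooth_a1: "smooth_fn U a1"
  unfolding A1_def[abs_def]
  by (intro smooth_fn_divide smooth_fn.add smooth_fn.mult smooth_fn.const smooth_dz1 smooth_Fc
      smooth_dv)
     (use A_denominator_nonzero in auto)

lemma smooth_a2: "smooth_fn U a2"
  unfolding A2_def[abs_def]
  by (intro smooth_fn_divide smooth_fn.add smooth_fn.mult smooth_fn.const smooth_dz2 smooth_Fc
      smooth_dv)
     (use A_denominator_nonzero in auto)

lemma smooth_b1: "smooth_fn U b1" by (intro smooth_fn.cnj smooth_a1)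
lemma smooth_b2: "smooth_fn U b2" by (intro smooth_fn.cnj smooth_a2)

lemma is_vfield_L1: "is_vfield U L1"
  unfolding L1op_vfield by (rule is_vfield_coeffs[OF smooth_a1])
lemma is_vfield_L2: "is_vfield U L2"
  unfolding L2op_vfield by (rule is_vfield_coeffs[OF smooth_a2])
lemma is_vfield_Lb1: "is_vfield U Lb1"
  unfolding Lb1op_vfield by (rule is_vfield_coeffs[OF smooth_b1])
lemma is_vfield_Lb2: "is_vfield U Lb2"
  unfolding Lb2op_vfield by (rule is_vfield_coeffs[OF smooth_b2])
lemma is_vfield_dv: "is_vfield U dv"
  unfolding dv_vfield by (rule is_vfield_coeffs[OF smooth_fn.const])

lemma smooth_l: "smooth_fn U l"
  unfolding ell_def[abs_def]
  by (intro smooth_fn.mult smooth_fn.const smooth_fn_diff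
      derivation_smooth[OF open_U is_vfield_L1 smooth_b1] derivation_smooth[OF open_U is_vfield_Lb1 smooth_a1])

lemma levi_11: "L1 b1 x - Lb1 a1 x = - \<i> * l x"
  by (simp add: ell_def)

lemma smooth_k: "smooth_fn U k"
  unfolding kk_def[abs_def]
  by (intro smooth_fn_divide smooth_fn_minus smooth_fn_diff
      derivation_smooth[OF open_U is_vfield_L1 smooth_b1] derivation_smooth[OF open_U is_vfield_Lb1 smooth_a1]
      derivation_smooth[OF open_U is_vfield_L2 smooth_b1] derivation_smooth[OF open_U is_vfield_Lb1 smooth_a2])
     (use ell_nonzero in \<open>auto simp: levi_11\<close>)

lemma smooth_kb: "smooth_fn U kb" by (intro smooth_fn.cnj smooth_k)

lemma is_vfield_K: "is_vfield U K"
  unfolding Kop_def[abs_def]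
  by (intro is_vfield_add[OF open_U] is_vfield_scale[OF open_U] is_vfield_L1 is_vfield_L2 smooth_k)

lemma is_vfield_Kb: "is_vfield U Kb"
  unfolding Kbop_def[abs_def]
  by (intro is_vfield_add[OF open_U] is_vfield_scale[OF open_U] is_vfield_Lb1 is_vfield_Lb2 smooth_kb)

lemma is_vfield_T: "is_vfield U T"
  unfolding Top_def[abs_def] by (intro is_vfield_scale[OF open_U] is_vfield_dv smooth_l)

lemmas is_vfields = is_vfield_L1 is_vfield_L2 is_vfield_Lb1 is_vfield_Lb2 is_vfield_dv
  is_vfield_K is_vfield_Kb is_vfield_T

lemmas derivation_rules =
  is_vfields[THEN derivation_add[OF open_U]] is_vfields[THEN derivation_diff[OF open_U]]
  is_vfields[THEN derivation_mult[OF open_U]] is_vfields[THEN derivation_const[OF open_U]]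
  is_vfields[THEN derivation_minus[OF open_U]]

lemmas smooth_rules = smooth_a1 smooth_a2 smooth_b1 smooth_b2 smooth_l smooth_k smooth_kb
  is_vfields[THEN derivation_smooth[OF open_U]] smooth_fn.mult smooth_fn.add smooth_fn_diff smooth_fn.const
  smooth_fn.cnj smooth_fn_minus

lemma cnj_L1: "g differentiable (at x) \<Longrightarrow> cnj (L1 g x) = Lb1 (\<lambda>y. cnj (g y)) x"
  by (simp add: L1op_def Lb1op_def dz1_def dzb1_def dx1_def dy1_def dv_def dirD_cnj)
lemma cnj_L2: "g differentiable (at x) \<Longrightarrow> cnj (L2 g x) = Lb2 (\<lambda>y. cnj (g y)) x"
  by (simp add: L2op_def Lb2op_def dz2_def dzb2_def dx2_def dy2_def dv_def dirD_cnj)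
lemma cnj_Lb1: "g differentiable (at x) \<Longrightarrow> cnj (Lb1 g x) = L1 (\<lambda>y. cnj (g y)) x"
  by (simp add: L1op_def Lb1op_def dz1_def dzb1_def dx1_def dy1_def dv_def dirD_cnj)
lemma cnj_dv: "g differentiable (at x) \<Longrightarrow> cnj (dv g x) = dv (\<lambda>y. cnj (g y)) x"
  by (simp add: dv_def dirD_cnj)
lemma cnj_K: "g differentiable (at x) \<Longrightarrow> cnj (K g x) = Kb (\<lambda>y. cnj (g y)) x"
  by (simp add: Kop_def Kbop_def cnj_L1 cnj_L2)

lemma l_real: "x \<in> U \<Longrightarrow> cnj (l x) = l x"
proof -
  assume x: "x \<in> U"
  have "cnj (l x) = - \<i> * (cnj (L1 b1 x) - cnj (Lb1 a1 x))" by (simp add: ell_def)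
  also have "\<dots> = - \<i> * (Lb1 a1 x - L1 b1 x)"
    using cnj_L1[OF smooth_fn_differentiable[OF open_U smooth_b1 x]] cnj_Lb1[OF smooth_fn_differentiable[OF open_U smooth_a1 x]] by simp
  also have "\<dots> = l x" by (simp add: ell_def algebra_simps)
  finally show ?thesis .
qed

lemma derivation_cnj_l: "is_vfield U D \<Longrightarrow> x \<in> U \<Longrightarrow> D (\<lambda>y. cnj (l y)) x = D l x"
  by (rule derivation_cong[OF open_U]) (auto intro: smooth_fn.cnj smooth_l simp: l_real)

lemma cnj_Lb1_k: "x \<in> U \<Longrightarrow> cnj (Lb1 k x) = L1 kb x"
  using cnj_Lb1[OF smooth_fn_differentiable[OF open_U smooth_k]] by simp

lemma cnj_L1_k: "x \<in> U \<Longrightarrow> cnj (L1 k x) = Lb1 kb x"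
  using cnj_L1[OF smooth_fn_differentiable[OF open_U smooth_k]] by simp

lemma cnj_Lb1_Lb1_k: "x \<in> U \<Longrightarrow> cnj (Lb1 (Lb1 k) x) = L1 (L1 kb) x"
proof -
  assume x: "x \<in> U"
  have "cnj (Lb1 (Lb1 k) x) = L1 (\<lambda>y. cnj (Lb1 k y)) x"
    using cnj_Lb1[OF smooth_fn_differentiable[OF open_U derivation_smooth[OF open_U is_vfield_Lb1 smooth_k] x]] .
  also have "\<dots> = L1 (L1 kb) x"
    by (rule derivation_cong[OF open_U is_vfield_L1 _ x]) (auto simp: smooth_rules cnj_Lb1_k)
  finally show ?thesis .
qed

lemma cnj_L1_L1_k: "x \<in> U \<Longrightarrow> cnj (L1 (L1 k) x) = Lb1 (Lb1 kb) x"
proof -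
  assume x: "x \<in> U"
  have "cnj (L1 (L1 k) x) = Lb1 (\<lambda>y. cnj (L1 k y)) x"
    using cnj_L1[OF smooth_fn_differentiable[OF open_U derivation_smooth[OF open_U is_vfield_L1 smooth_k] x]] .
  also have "\<dots> = Lb1 (Lb1 kb) x"
    by (rule derivation_cong[OF open_U is_vfield_Lb1 _ x]) (auto simp: smooth_rules cnj_L1_k)
  finally show ?thesis .
qed

lemma levi_21: "x \<in> U \<Longrightarrow> L2 b1 x - Lb1 a2 x = \<i> * k x * l x"
proof -
  assume x: "x \<in> U"
  have "k x * (L1 b1 x - Lb1 a1 x) = - (L2 b1 x - Lb1 a2 x)"
    using ell_nonzero[OF x] by (simp add: kk_def levi_11)
  then show ?thesis by (simp add: levi_11 algebra_simps)
qed

lemma levi_12: "x \<in> U \<Longrightarrow> L1 b2 x - Lb2 a1 x = \<i> * kb x * l x"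
proof -
  assume x: "x \<in> U"
  have "cnj (L2 b1 x - Lb1 a2 x) = Lb2 a1 x - L1 b2 x"
    using cnj_L2[OF smooth_fn_differentiable[OF open_U smooth_b1 x]] cnj_Lb1[OF smooth_fn_differentiable[OF open_U smooth_a2 x]] by simp
  then show ?thesis using levi_21[OF x] l_real[OF x] by (simp add: algebra_simps)
qed

text \<open>Here the rank assumption enters: the Levi matrix is singular.\<close>

lemma levi_22: "x \<in> U \<Longrightarrow> L2 b2 x - Lb2 a2 x = - \<i> * k x * kb x * l x"
proof -
  assume x: "x \<in> U"
  have "(\<i> * (L1 b1 x - Lb1 a1 x)) * (\<i> * (L2 b2 x - Lb2 a2 x))
      - (\<i> * (L1 b2 x - Lb2 a1 x)) * (\<i> * (L2 b1 x - Lb1 a2 x)) = 0"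
    using det_eq_0_if_rank_1[OF levi_rank[OF x]] by (simp add: det_2 levi_def Lop_def Lbop_def Aj_def)
  then have "\<i> * l x * ((L2 b2 x - Lb2 a2 x) + \<i> * k x * kb x * l x) = 0"
    unfolding levi_11 levi_12[OF x] levi_21[OF x] by (simp add: algebra_simps)
  then show ?thesis
    using ell_nonzero[OF x] by (simp add: eq_neg_iff_add_eq_0)
qed

lemma bracket_L1_L2: "smooth_fn U g \<Longrightarrow> x \<in> U \<Longrightarrow>
  L1 (L2 g) x - L2 (L1 g) x = (L1 a2 x - L2 a1 x) * dv g x"
  unfolding L1op_vfield L2op_vfield by (rule vfield_coeffs_commutator[OF open_U _ smooth_a1 smooth_a2])
lemma bracket_L1_Lb1: "smooth_fn U g \<Longrightarrow> x \<in> U \<Longrightarrow>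
  L1 (Lb1 g) x - Lb1 (L1 g) x = (L1 b1 x - Lb1 a1 x) * dv g x"
  unfolding L1op_vfield Lb1op_vfield by (rule vfield_coeffs_commutator[OF open_U _ smooth_a1 smooth_b1])
lemma bracket_L1_Lb2: "smooth_fn U g \<Longrightarrow> x \<in> U \<Longrightarrow>
  L1 (Lb2 g) x - Lb2 (L1 g) x = (L1 b2 x - Lb2 a1 x) * dv g x"
  unfolding L1op_vfield Lb2op_vfield by (rule vfield_coeffs_commutator[OF open_U _ smooth_a1 smooth_b2])
lemma bracket_L2_Lb1: "smooth_fn U g \<Longrightarrow> x \<in> U \<Longrightarrow>
  L2 (Lb1 g) x - Lb1 (L2 g) x = (L2 b1 x - Lb1 a2 x) * dv g x"
  unfolding L2op_vfield Lb1op_vfield by (rule vfield_coeffs_commutator[OF open_U _ smooth_a2 smooth_b1])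
lemma bracket_L2_Lb2: "smooth_fn U g \<Longrightarrow> x \<in> U \<Longrightarrow>
  L2 (Lb2 g) x - Lb2 (L2 g) x = (L2 b2 x - Lb2 a2 x) * dv g x"
  unfolding L2op_vfield Lb2op_vfield by (rule vfield_coeffs_commutator[OF open_U _ smooth_a2 smooth_b2])
lemma bracket_Lb1_Lb2: "smooth_fn U g \<Longrightarrow> x \<in> U \<Longrightarrow>
  Lb1 (Lb2 g) x - Lb2 (Lb1 g) x = (Lb1 b2 x - Lb2 b1 x) * dv g x"
  unfolding Lb1op_vfield Lb2op_vfield by (rule vfield_coeffs_commutator[OF open_U _ smooth_b1 smooth_b2])
lemma bracket_L1_dv: "smooth_fn U g \<Longrightarrow> x \<in> U \<Longrightarrow> L1 (dv g) x - dv (L1 g) x = - dv a1 x * dv g x"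
  using vfield_coeffs_commutator[OF open_U _ smooth_a1 smooth_fn.const, of x g]
  unfolding L1op_vfield dv_vfield by simp
lemma bracket_L2_dv: "smooth_fn U g \<Longrightarrow> x \<in> U \<Longrightarrow> L2 (dv g) x - dv (L2 g) x = - dv a2 x * dv g x"
  using vfield_coeffs_commutator[OF open_U _ smooth_a2 smooth_fn.const, of x g]
  unfolding L2op_vfield dv_vfield by simp
lemma bracket_Lb1_dv: "smooth_fn U g \<Longrightarrow> x \<in> U \<Longrightarrow> Lb1 (dv g) x - dv (Lb1 g) x = - dv b1 x * dv g x"
  using vfield_coeffs_commutator[OF open_U _ smooth_b1 smooth_fn.const, of x g]
  unfolding Lb1op_vfield dv_vfield by simp

lemma smooth_wbar: "smooth_fn U (wbar F)"
  unfolding wbar_def[abs_def]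
  by (intro smooth_fn_diff smooth_fn.mult smooth_fn.const smooth_Fc smooth_fn.linear bounded_linear_fv)

lemma fv_derivatives: "L1 fv x = a1 x" "L2 fv x = a2 x" "dv fv x = 1"
  by (simp_all add: L1op_def L2op_def dz1_def dz2_def dx1_def dy1_def dx2_def dy2_def dv_def dirD_fv fv_def)

lemma derivation_wbar:
  assumes "is_vfield U D" "x \<in> U"
  shows "D (wbar F) x = D (Fc F) x - \<i> * D fv x"
proof -
  have fv: "smooth_fn U fv" by (rule smooth_fn.linear[OF bounded_linear_fv])
  have "D (wbar F) x = D (Fc F) x - D (\<lambda>q. \<i> * fv q) x"
    unfolding wbar_def[abs_def]
    by (rule derivation_diff[OF open_U assms(1) smooth_Fc smooth_fn.mult[OF smooth_fn.const fv] assms(2)])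
  also have "D (\<lambda>q. \<i> * fv q) x = \<i> * D fv x"
    using derivation_mult[OF open_U assms(1) smooth_fn.const fv assms(2)] derivation_const[OF open_U assms(1)]
    by simp
  finally show ?thesis .
qed

lemma L1_wbar: "x \<in> U \<Longrightarrow> L1 (wbar F) x = 0"
  using A_denominator_nonzero[of x]
  by (simp add: derivation_wbar is_vfield_L1 fv_derivatives) (simp add: L1op_def A1_def field_simps)

lemma L2_wbar: "x \<in> U \<Longrightarrow> L2 (wbar F) x = 0"
  using A_denominator_nonzero[of x]
  by (simp add: derivation_wbar is_vfield_L2 fv_derivatives) (simp add: L2op_def A2_def field_simps)

lemma dv_wbar_nonzero: "x \<in> U \<Longrightarrow> dv (wbar F) x \<noteq> 0"
  using dv_Fc[of x] by (auto simp: derivation_wbar is_vfield_dv fv_derivatives complex_eq_iff)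

text \<open>Integrability of the CR structure: \<open>[L\<^sub>1, L\<^sub>2]\<close> is a multiple of \<open>\<partial>\<^sub>v\<close> and kills \<open>w\<close>-bar.\<close>

lemma L1_a2_eq_L2_a1: "x \<in> U \<Longrightarrow> L1 a2 x = L2 a1 x"
proof -
  assume x: "x \<in> U"
  have "L1 (L2 (wbar F)) x = 0" "L2 (L1 (wbar F)) x = 0"
    using derivation_vanishing[OF open_U is_vfield_L1 x] derivation_vanishing[OF open_U is_vfield_L2 x]
      L1_wbar L2_wbar by blast+
  then have "(L1 a2 x - L2 a1 x) * dv (wbar F) x = 0"
    using bracket_L1_L2[OF smooth_wbar x] by simp
  then show ?thesis using dv_wbar_nonzero[OF x] by simp
qed

lemma Lb1_b2_eq_Lb2_b1: "x \<in> U \<Longrightarrow> Lb1 b2 x = Lb2 b1 x"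
  using arg_cong[OF L1_a2_eq_L2_a1, of x cnj]
  by (simp add: cnj_L1[OF smooth_fn_differentiable[OF open_U smooth_a2]] cnj_L2[OF smooth_fn_differentiable[OF open_U smooth_a1]])

lemma commute_L1_L2: "smooth_fn U g \<Longrightarrow> x \<in> U \<Longrightarrow> L1 (L2 g) x = L2 (L1 g) x"
  using bracket_L1_L2 L1_a2_eq_L2_a1 by fastforce
lemma commute_Lb1_Lb2: "smooth_fn U g \<Longrightarrow> x \<in> U \<Longrightarrow> Lb1 (Lb2 g) x = Lb2 (Lb1 g) x"
  using bracket_Lb1_Lb2 Lb1_b2_eq_Lb2_b1 by fastforce
lemma commutator_L1_Lb1: "smooth_fn U g \<Longrightarrow> x \<in> U \<Longrightarrow> L1 (Lb1 g) x - Lb1 (L1 g) x = - \<i> * l x * dv g x"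
  using bracket_L1_Lb1 levi_11 by simp
lemma commutator_L2_Lb1: "smooth_fn U g \<Longrightarrow> x \<in> U \<Longrightarrow> L2 (Lb1 g) x - Lb1 (L2 g) x = \<i> * k x * l x * dv g x"
  using bracket_L2_Lb1 levi_21 by simp
lemma commutator_L1_Lb2: "smooth_fn U g \<Longrightarrow> x \<in> U \<Longrightarrow> L1 (Lb2 g) x - Lb2 (L1 g) x = \<i> * kb x * l x * dv g x"
  using bracket_L1_Lb2 levi_12 by simp
lemma commutator_L2_Lb2:
  "smooth_fn U g \<Longrightarrow> x \<in> U \<Longrightarrow> L2 (Lb2 g) x - Lb2 (L2 g) x = - \<i> * k x * kb x * l x * dv g x"
  using bracket_L2_Lb2 levi_22 by simp

lemma commutator_K_L1: "smooth_fn U g \<Longrightarrow> x \<in> U \<Longrightarrow> K (L1 g) x - L1 (K g) x = - (L1 k x * L1 g x)"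
  unfolding Kop_def[abs_def]
  by (simp add: derivation_rules smooth_rules smooth_k commute_L1_L2 algebra_simps)

lemma commutator_K_Lb1: "smooth_fn U g \<Longrightarrow> x \<in> U \<Longrightarrow> K (Lb1 g) x - Lb1 (K g) x = - (Lb1 k x * L1 g x)"
proof -
  assume g: "smooth_fn U g" and x: "x \<in> U"
  have "Lb1 (K g) x = k x * Lb1 (L1 g) x + L1 g x * Lb1 k x + Lb1 (L2 g) x"
    unfolding Kop_def[abs_def] using x g by (simp add: derivation_rules smooth_rules)
  moreover have "Lb1 (L1 g) x = L1 (Lb1 g) x + \<i> * l x * dv g x"
    using commutator_L1_Lb1[OF g x] by (simp add: algebra_simps)
  moreover have "L2 (Lb1 g) x = Lb1 (L2 g) x + \<i> * k x * l x * dv g x"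
    using commutator_L2_Lb1[OF g x] by (simp add: algebra_simps)
  ultimately show ?thesis by (simp add: Kop_def algebra_simps)
qed

lemma commutator_Kb_Lb1: "smooth_fn U g \<Longrightarrow> x \<in> U \<Longrightarrow> Kb (Lb1 g) x - Lb1 (Kb g) x = - (Lb1 kb x * Lb1 g x)"
  unfolding Kbop_def[abs_def]
  by (simp add: derivation_rules smooth_rules commute_Lb1_Lb2 algebra_simps)

end

context levi_rank_one
begin

lemmas derivation_divide_rules = is_vfields[THEN derivation_divide[OF open_U]]

text \<open>Jacobi identities, written in terms of the coefficients of the brackets.\<close>

lemma jacobi_L1_L2_Lb1: "x \<in> U \<Longrightarrow>
  L1 (\<lambda>y. L2 b1 y - Lb1 a2 y) x - L2 (\<lambda>y. L1 b1 y - Lb1 a1 y) x = \<i> * l x * dv a2 x + \<i> * k x * l x * dv a1 x"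
proof -
  assume x: "x \<in> U"
  have "Lb1 (L1 a2) x = Lb1 (L2 a1) x"
    by (rule derivation_cong[OF open_U is_vfield_Lb1 _ x]) (use L1_a2_eq_L2_a1 smooth_rules in auto)
  then show ?thesis
    using x commute_L1_L2[OF smooth_b1 x] commutator_L1_Lb1[OF smooth_a2 x] commutator_L2_Lb1[OF smooth_a1 x]
    by (simp add: derivation_rules smooth_rules algebra_simps)
qed

lemma jacobi_Lb1_Lb2_L1: "x \<in> U \<Longrightarrow>
  Lb2 (\<lambda>y. L1 b1 y - Lb1 a1 y) x - Lb1 (\<lambda>y. L1 b2 y - Lb2 a1 y) x = - \<i> * l x * dv b2 x - \<i> * kb x * l x * dv b1 x"
proof -
  assume x: "x \<in> U"
  have "L1 (Lb2 b1) x = L1 (Lb1 b2) x"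
    by (rule derivation_cong[OF open_U is_vfield_L1 _ x]) (use Lb1_b2_eq_Lb2_b1 smooth_rules in auto)
  then show ?thesis
    using x commute_Lb1_Lb2[OF smooth_a1 x] commutator_L1_Lb2[OF smooth_b1 x] commutator_L1_Lb1[OF smooth_b2 x]
    by (simp add: derivation_rules smooth_rules algebra_simps)
qed

lemma jacobi_Lb1_Lb2_L2: "x \<in> U \<Longrightarrow>
  Lb2 (\<lambda>y. L2 b1 y - Lb1 a2 y) x - Lb1 (\<lambda>y. L2 b2 y - Lb2 a2 y) x
    = \<i> * k x * l x * dv b2 x + \<i> * k x * kb x * l x * dv b1 x"
proof -
  assume x: "x \<in> U"
  have "L2 (Lb2 b1) x = L2 (Lb1 b2) x"
    by (rule derivation_cong[OF open_U is_vfield_L2 _ x]) (use Lb1_b2_eq_Lb2_b1 smooth_rules in auto)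
  then show ?thesis
    using x commute_Lb1_Lb2[OF smooth_a2 x] commutator_L2_Lb2[OF smooth_b1 x] commutator_L2_Lb1[OF smooth_b2 x]
    by (simp add: derivation_rules smooth_rules algebra_simps)
qed

lemma derivation_levi:
  assumes "is_vfield U D" "x \<in> U"
  shows "D (\<lambda>y. L1 b1 y - Lb1 a1 y) x = - \<i> * D l x"
    and "D (\<lambda>y. L2 b1 y - Lb1 a2 y) x = \<i> * (k x * D l x + l x * D k x)"
    and "D (\<lambda>y. L1 b2 y - Lb2 a1 y) x = \<i> * (kb x * D l x + l x * D kb x)"
    and "D (\<lambda>y. L2 b2 y - Lb2 a2 y) x = - \<i> * (k x * kb x * D l x + k x * l x * D kb x + kb x * l x * D k x)"
proof -
  note cong = derivation_cong[OF open_U assms(1) _ assms(2)]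
  note rules = derivation_mult[OF open_U assms(1)] derivation_const[OF open_U assms(1)]
    derivation_minus[OF open_U assms(1)]
  have "D (\<lambda>y. L1 b1 y - Lb1 a1 y) x = D (\<lambda>y. - \<i> * l y) x"
    by (rule cong) (simp_all add: smooth_rules levi_11)
  then show "D (\<lambda>y. L1 b1 y - Lb1 a1 y) x = - \<i> * D l x"
    using assms(2) by (simp add: rules smooth_rules)
  have "D (\<lambda>y. L2 b1 y - Lb1 a2 y) x = D (\<lambda>y. \<i> * k y * l y) x"
    by (rule cong) (simp_all add: smooth_rules levi_21)
  then show "D (\<lambda>y. L2 b1 y - Lb1 a2 y) x = \<i> * (k x * D l x + l x * D k x)"
    using assms(2) by (simp add: rules smooth_rules algebra_simps)
  have "D (\<lambda>y. L1 b2 y - Lb2 a1 y) x = D (\<lambda>y. \<i> * kb y * l y) x"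
    by (rule cong) (simp_all add: smooth_rules levi_12)
  then show "D (\<lambda>y. L1 b2 y - Lb2 a1 y) x = \<i> * (kb x * D l x + l x * D kb x)"
    using assms(2) by (simp add: rules smooth_rules algebra_simps)
  have "D (\<lambda>y. L2 b2 y - Lb2 a2 y) x = D (\<lambda>y. - \<i> * k y * kb y * l y) x"
    by (rule cong) (simp_all add: smooth_rules levi_22)
  then show "D (\<lambda>y. L2 b2 y - Lb2 a2 y) x =
      - \<i> * (k x * kb x * D l x + k x * l x * D kb x + kb x * l x * D k x)"
    using assms(2) by (simp add: rules smooth_rules algebra_simps)
qed

lemma K_l: "x \<in> U \<Longrightarrow> K l x = l x * (k x * dv a1 x + dv a2 x - L1 k x)"
proof -
  assume x: "x \<in> U"
  have "\<i> * (k x * L1 l x + l x * L1 k x + L2 l x) = \<i> * (l x * dv a2 x + k x * l x * dv a1 x)"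
    using jacobi_L1_L2_Lb1[OF x]
    unfolding derivation_levi(1,2)[OF is_vfield_L2 x] derivation_levi(1,2)[OF is_vfield_L1 x]
    by (simp add: algebra_simps)
  then have "k x * L1 l x + l x * L1 k x + L2 l x = l x * dv a2 x + k x * l x * dv a1 x"
    by (simp only: mult_cancel_left complex_i_not_zero simp_thms)
  then show ?thesis by (simp add: Kop_def algebra_simps)
qed

lemma Kb_k: "x \<in> U \<Longrightarrow> Kb k x = 0"
proof -
  assume x: "x \<in> U"
  have "(Lb2 (\<lambda>y. L2 b1 y - Lb1 a2 y) x - Lb1 (\<lambda>y. L2 b2 y - Lb2 a2 y) x)
      + k x * (Lb2 (\<lambda>y. L1 b1 y - Lb1 a1 y) x - Lb1 (\<lambda>y. L1 b2 y - Lb2 a1 y) x)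
      = (\<i> * k x * l x * dv b2 x + \<i> * k x * kb x * l x * dv b1 x)
      + k x * (- \<i> * l x * dv b2 x - \<i> * kb x * l x * dv b1 x)"
    unfolding jacobi_Lb1_Lb2_L1[OF x] jacobi_Lb1_Lb2_L2[OF x] ..
  then have "\<i> * l x * (kb x * Lb1 k x + Lb2 k x) = 0"
    unfolding derivation_levi[OF is_vfield_Lb1 x] derivation_levi[OF is_vfield_Lb2 x]
    by (simp add: algebra_simps)
  then show ?thesis using ell_nonzero[OF x] by (simp add: Kbop_def)
qed

lemma Lb2_k: "x \<in> U \<Longrightarrow> Lb2 k x = - (kb x * Lb1 k x)"
  using Kb_k[of x] unfolding Kbop_def by (simp add: eq_neg_iff_add_eq_0 add.commute)

lemma Kb_Lb1_k: "x \<in> U \<Longrightarrow> Kb (Lb1 k) x = - (Lb1 k x * Lb1 kb x)"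
proof -
  assume x: "x \<in> U"
  have "Lb2 (Lb1 k) x = Lb1 (Lb2 k) x"
    using commute_Lb1_Lb2[OF smooth_k x] by simp
  also have "\<dots> = Lb1 (\<lambda>y. - (kb y * Lb1 k y)) x"
    by (rule derivation_cong[OF open_U is_vfield_Lb1 _ x]) (use Lb2_k smooth_rules in auto)
  also have "\<dots> = - (kb x * Lb1 (Lb1 k) x + Lb1 k x * Lb1 kb x)"
    using x by (simp add: derivation_rules smooth_rules)
  finally show ?thesis by (simp add: Kbop_def)
qed

lemma Kb_l: "x \<in> U \<Longrightarrow> Kb l x = l x * (kb x * dv b1 x + dv b2 x - Lb1 kb x)"
proof -
  assume x: "x \<in> U"
  have "Kb l x = cnj (K l x)"
    using cnj_K[OF smooth_fn_differentiable[OF open_U smooth_l x]] derivation_cnj_l[OF is_vfield_Kb x] by simp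
  then show ?thesis
    using K_l[OF x] l_real[OF x] cnj_dv[OF smooth_fn_differentiable[OF open_U smooth_a1 x]]
      cnj_dv[OF smooth_fn_differentiable[OF open_U smooth_a2 x]] cnj_L1_k[OF x] by simp
qed

lemma P_eq: "x \<in> U \<Longrightarrow> P x = L1 l x / l x - dv a1 x"
  using ell_nonzero[of x] by (simp add: PP_def L1op_def field_simps)

lemma Pb_eq: "x \<in> U \<Longrightarrow> cnj (P x) = Lb1 l x / l x - dv b1 x"
proof -
  assume x: "x \<in> U"
  have "cnj (L1 l x) = Lb1 l x"
    using cnj_L1[OF smooth_fn_differentiable[OF open_U smooth_l x]] derivation_cnj_l[OF is_vfield_Lb1 x] by simp
  then show ?thesis
    using P_eq[OF x] l_real[OF x] cnj_dv[OF smooth_fn_differentiable[OF open_U smooth_a1 x]] by simp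
qed

lemma smooth_P: "smooth_fn U P"
proof (rule smooth_fn.cong)
  show "smooth_fn U (\<lambda>x. L1 l x / l x - dv a1 x)"
    by (intro smooth_fn_diff smooth_fn_divide) (use ell_nonzero smooth_rules in auto)
qed (simp add: P_eq)

lemma smooth_Pb: "smooth_fn U Pb" by (intro smooth_fn.cnj smooth_P)

lemma K_dv_a1:
  "x \<in> U \<Longrightarrow> K (dv a1) x = k x * (dv (L1 a1) x - dv a1 x * dv a1 x) + dv (L1 a2) x - dv a1 x * dv a2 x"
proof -
  assume x: "x \<in> U"
  have "dv (L2 a1) x = dv (L1 a2) x"
    by (rule derivation_cong[OF open_U is_vfield_dv _ x]) (use L1_a2_eq_L2_a1 smooth_rules in auto)
  moreover have "L1 (dv a1) x = dv (L1 a1) x - dv a1 x * dv a1 x"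
    using bracket_L1_dv[OF smooth_a1 x] by (simp add: algebra_simps)
  moreover have "L2 (dv a1) x = dv (L2 a1) x - dv a2 x * dv a1 x"
    using bracket_L2_dv[OF smooth_a1 x] by (simp add: algebra_simps)
  ultimately show ?thesis by (simp only: Kop_def) (simp add: algebra_simps)
qed

lemma K_P: "x \<in> U \<Longrightarrow> K P x = - L1 (L1 k) x - P x * L1 k x"
proof -
  assume x: "x \<in> U"
  have l0: "l x \<noteq> 0" using ell_nonzero[OF x] .
  have "K P x = K (\<lambda>y. L1 l y / l y - dv a1 y) x"
    by (rule derivation_cong[OF open_U is_vfield_K smooth_P x]) (simp add: P_eq)
  also have "\<dots> = (l x * K (L1 l) x - L1 l x * K l x) / (l x * l x) - K (dv a1) x"
    using x l0 ell_nonzero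
    by (simp add: derivation_rules derivation_divide_rules smooth_rules smooth_fn_divide)
  also have "K (L1 l) x = L1 (K l) x - L1 k x * L1 l x"
    using commutator_K_L1[OF smooth_l x] by (simp add: algebra_simps)
  also have "L1 (K l) x = L1 (\<lambda>y. l y * (k y * dv a1 y + dv a2 y - L1 k y)) x"
    by (rule derivation_cong[OF open_U is_vfield_L1 _ x]) (use K_l smooth_rules in auto)
  also have "\<dots> = l x * (k x * L1 (dv a1) x + dv a1 x * L1 k x + L1 (dv a2) x - L1 (L1 k) x)
      + (k x * dv a1 x + dv a2 x - L1 k x) * L1 l x"
    using x by (simp add: derivation_rules smooth_rules)
  also have "L1 (dv a1) x = dv (L1 a1) x - dv a1 x * dv a1 x"
    using bracket_L1_dv[OF smooth_a1 x] by (simp add: algebra_simps)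
  also have "L1 (dv a2) x = dv (L1 a2) x - dv a1 x * dv a2 x"
    using bracket_L1_dv[OF smooth_a2 x] by (simp add: algebra_simps)
  finally show ?thesis
    by (rule trans) (use l0 in \<open>simp add: K_dv_a1[OF x] K_l[OF x] P_eq[OF x] field_simps\<close>)
qed

lemma K_dv_b1: "x \<in> U \<Longrightarrow> K (dv b1) x = k x * Lb1 (dv a1) x + Lb1 (dv a2) x + \<i> * l x * dv k x"
proof -
  assume x: "x \<in> U"
  have "dv (L1 b1) x = dv (\<lambda>y. Lb1 a1 y - \<i> * l y) x"
    by (rule derivation_cong[OF open_U is_vfield_dv _ x]) (use levi_11 smooth_rules in \<open>auto simp: algebra_simps\<close>)
  then have e1: "dv (L1 b1) x = dv (Lb1 a1) x - \<i> * dv l x"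
    using x by (simp add: derivation_rules smooth_rules)
  have "dv (L2 b1) x = dv (\<lambda>y. Lb1 a2 y + \<i> * k y * l y) x"
    by (rule derivation_cong[OF open_U is_vfield_dv _ x]) (use levi_21 smooth_rules in \<open>auto simp: algebra_simps\<close>)
  then have e2: "dv (L2 b1) x = dv (Lb1 a2) x + \<i> * (k x * dv l x + l x * dv k x)"
    using x by (simp add: derivation_rules smooth_rules algebra_simps)
  have e3: "L1 (dv b1) x = dv (L1 b1) x - dv a1 x * dv b1 x"
    using bracket_L1_dv[OF smooth_b1 x] by (simp add: algebra_simps)
  have e4: "L2 (dv b1) x = dv (L2 b1) x - dv a2 x * dv b1 x"
    using bracket_L2_dv[OF smooth_b1 x] by (simp add: algebra_simps)
  have e5: "dv (Lb1 a1) x = Lb1 (dv a1) x + dv b1 x * dv a1 x"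
    using bracket_Lb1_dv[OF smooth_a1 x] by (simp add: algebra_simps)
  have e6: "dv (Lb1 a2) x = Lb1 (dv a2) x + dv b1 x * dv a2 x"
    using bracket_Lb1_dv[OF smooth_a2 x] by (simp add: algebra_simps)
  show ?thesis
    unfolding Kop_def e3 e4 e1 e2 e5 e6 by (simp add: algebra_simps)
qed

lemma K_Pb: "x \<in> U \<Longrightarrow> K Pb x = - \<i> * T k x - P x * Lb1 k x - Lb1 (L1 k) x"
proof -
  assume x: "x \<in> U"
  have l0: "l x \<noteq> 0" using ell_nonzero[OF x] .
  have "K Pb x = K (\<lambda>y. Lb1 l y / l y - dv b1 y) x"
    by (rule derivation_cong[OF open_U is_vfield_K smooth_Pb x]) (simp add: Pb_eq)
  also have "\<dots> = (l x * K (Lb1 l) x - Lb1 l x * K l x) / (l x * l x) - K (dv b1) x"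
    using x l0 ell_nonzero
    by (simp add: derivation_rules derivation_divide_rules smooth_rules smooth_fn_divide)
  also have "K (Lb1 l) x = Lb1 (K l) x - Lb1 k x * L1 l x"
    using commutator_K_Lb1[OF smooth_l x] by (simp add: algebra_simps)
  also have "Lb1 (K l) x = Lb1 (\<lambda>y. l y * (k y * dv a1 y + dv a2 y - L1 k y)) x"
    by (rule derivation_cong[OF open_U is_vfield_Lb1 _ x]) (use K_l smooth_rules in auto)
  also have "\<dots> = l x * (k x * Lb1 (dv a1) x + dv a1 x * Lb1 k x + Lb1 (dv a2) x - Lb1 (L1 k) x)
      + (k x * dv a1 x + dv a2 x - L1 k x) * Lb1 l x"
    using x by (simp add: derivation_rules smooth_rules)
  finally show ?thesis
    by (rule trans) (use l0 in \<open>simp add: K_dv_b1[OF x] K_l[OF x] P_eq[OF x] Top_def field_simps\<close>)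
qed

lemma smooth_B0: "smooth_fn U (B0 F)"
proof (rule smooth_fn.cong)
  show "smooth_fn U (\<lambda>x. Lb1 (Lb1 k) x / Lb1 k x - cnj (P x))"
    by (intro smooth_fn_diff smooth_fn_divide smooth_Pb smooth_rules) (use Lb1_k_nonzero in auto)
qed (simp add: B0_def)

lemma Kb_B0: "x \<in> U \<Longrightarrow> Kb (B0 F) x = - (Lb1 kb x * B0 F x)"
proof -
  assume x: "x \<in> U"
  have m0: "Lb1 k x \<noteq> 0" using Lb1_k_nonzero[OF x] .
  have "Kb (B0 F) x = (Lb1 k x * Kb (Lb1 (Lb1 k)) x - Lb1 (Lb1 k) x * Kb (Lb1 k) x) / (Lb1 k x * Lb1 k x)
      - Kb Pb x"
    unfolding B0_def[abs_def] using x m0 Lb1_k_nonzero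
    by (simp add: derivation_rules derivation_divide_rules smooth_rules smooth_fn_divide smooth_Pb)
  also have "Kb (Lb1 (Lb1 k)) x = Lb1 (Kb (Lb1 k)) x - Lb1 kb x * Lb1 (Lb1 k) x"
    using commutator_Kb_Lb1[OF derivation_smooth[OF open_U is_vfield_Lb1 smooth_k] x] by (simp add: algebra_simps)
  also have "Lb1 (Kb (Lb1 k)) x = Lb1 (\<lambda>y. - (Lb1 k y * Lb1 kb y)) x"
    by (rule derivation_cong[OF open_U is_vfield_Lb1 _ x]) (auto simp: smooth_rules Kb_Lb1_k)
  also have "Kb Pb x = cnj (K P x)"
    using cnj_K[OF smooth_fn_differentiable[OF open_U smooth_P x]] by simp
  finally show ?thesis
    by (rule trans)
       (use x m0 in \<open>simp add: K_P[OF x] Kb_Lb1_k[OF x] cnj_L1_k[OF x] cnj_L1_L1_k[OF x]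
          derivation_rules smooth_rules B0_def[of F x] field_simps\<close>)
qed

end

section \<open>Exterior derivatives of the coframe\<close>

lemma dirD_coords:
  assumes g: "g differentiable (at x)"
  shows "dirD g X x = fz1 X * L1op F g x + fz2 X * L2op F g x + cnj (fz1 X) * Lb1op F g x
    + cnj (fz2 X) * Lb2op F g x
    + (fv X - A1 F x * fz1 X - A2 F x * fz2 X - cnj (A1 F x) * cnj (fz1 X) - cnj (A2 F x) * cnj (fz2 X))
      * dv g x"
proof -
  obtain z1 z2 t where X0: "X = (z1, z2, t)" by (cases X) auto
  define r1 s1 r2 s2 where "r1 = Re z1" "s1 = Im z1" "r2 = Re z2" "s2 = Im z2"
  have X: "X = (of_real r1 + \<i> * of_real s1, of_real r2 + \<i> * of_real s2, t)"
    unfolding X0 r1_s1_r2_s2_def by (simp add: complex_eq_iff)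
  have "X = r1 *\<^sub>R (1, 0, 0) + s1 *\<^sub>R (\<i>, 0, 0) + r2 *\<^sub>R (0, 1, 0) + s2 *\<^sub>R (0, \<i>, 0) + t *\<^sub>R (0, 0, 1)"
    unfolding X by (simp add: complex_eq_iff)
  then have "dirD g X x = r1 *\<^sub>R dx1 g x + s1 *\<^sub>R dy1 g x + r2 *\<^sub>R dx2 g x + s2 *\<^sub>R dy2 g x + t *\<^sub>R dv g x"
    unfolding dx1_def dy1_def dx2_def dy2_def dv_def
    by (simp only: linear_add[OF linear_dirD[OF g]] linear_scale[OF linear_dirD[OF g]])
  then show ?thesis
    unfolding X fz1_def fz2_def fv_def fst_conv snd_conv
    by (simp add: L1op_def L2op_def Lb1op_def Lb2op_def dz1_def dz2_def dzb1_def dzb2_def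
        scaleR_conv_of_real algebra_simps diff_divide_distrib add_divide_distrib)
qed

text \<open>The form \<open>dz\<^sub>1 - k dz\<^sub>2\<close>, so that \<open>\<kappa>\<^sub>0' = \<theta> + (i/3) B\<^sub>0 \<rho>\<^sub>0\<close>.\<close>

definition theta :: "(pt \<Rightarrow> real) \<Rightarrow> pt \<Rightarrow> pt \<Rightarrow> complex" where
  "theta F x h = fz1 h - kk F x * fz2 h"

text \<open>The algebra behind \<open>d\<rho>\<^sub>0\<close>: the left-hand side is \<open>X(\<rho>\<^sub>0(Y)) - Y(\<rho>\<^sub>0(X))\<close> expanded in the frame
  \<open>L\<^sub>1, L\<^sub>2, L\<^sub>1-bar, L\<^sub>2-bar, l \<partial>\<^sub>v\<close>; \<open>z1, z2, w1, w2, rX\<close> are the values of \<open>dz\<^sub>1, dz\<^sub>2\<close>, their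
  conjugates and \<open>\<rho>\<^sub>0\<close> on \<open>X\<close> (suffix \<open>y\<close> for \<open>Y\<close>), and e.g. \<open>L2a1\<close> stands for \<open>L\<^sub>2(A\<^sup>1)\<close>, \<open>M1b2\<close> for
  \<open>L\<^sub>1-bar(A\<^sup>2-bar)\<close> and \<open>Dl\<close> for \<open>\<partial>\<^sub>v l\<close>; the hypotheses are the structure identities proved above.\<close>

lemma drho0_algebra:
  fixes z1 z2 w1 w2 rX z1y z2y w1y w2y rY l k kb P Pb L1k M1kb L1a1 L1a2 L1b1 L1b2 L1l L2a1 L2a2 L2b1
    L2b2 L2l M1a1 M1a2 M1b1 M1b2 M1l M2a1 M2a2 M2b1 M2b2 M2l Da1 Da2 Db1 Db2 Dl :: complex
  assumes "l \<noteq> 0"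
    and "L1a2 = L2a1" "M1b2 = M2b1" "L1b1 - M1a1 = - \<i> * l" "L2b1 - M1a2 = \<i> * k * l"
      "L1b2 - M2a1 = \<i> * kb * l" "L2b2 - M2a2 = - \<i> * k * kb * l"
      "k * L1l + L2l = l * (k * Da1 + Da2 - L1k)" "kb * M1l + M2l = l * (kb * Db1 + Db2 - M1kb)"
      "P = L1l / l - Da1" "Pb = M1l / l - Db1"
  shows "(z1 * (((- (L1a1 * z1y + L1a2 * z2y + L1b1 * w1y + L1b2 * w2y)) - rY * L1l) / l)
      + z2 * (((- (L2a1 * z1y + L2a2 * z2y + L2b1 * w1y + L2b2 * w2y)) - rY * L2l) / l)
      + w1 * (((- (M1a1 * z1y + M1a2 * z2y + M1b1 * w1y + M1b2 * w2y)) - rY * M1l) / l)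
      + w2 * (((- (M2a1 * z1y + M2a2 * z2y + M2b1 * w1y + M2b2 * w2y)) - rY * M2l) / l)
      + l * rX * (((- (Da1 * z1y + Da2 * z2y + Db1 * w1y + Db2 * w2y)) - rY * Dl) / l))
    - (z1y * (((- (L1a1 * z1 + L1a2 * z2 + L1b1 * w1 + L1b2 * w2)) - rX * L1l) / l)
      + z2y * (((- (L2a1 * z1 + L2a2 * z2 + L2b1 * w1 + L2b2 * w2)) - rX * L2l) / l)
      + w1y * (((- (M1a1 * z1 + M1a2 * z2 + M1b1 * w1 + M1b2 * w2)) - rX * M1l) / l)
      + w2y * (((- (M2a1 * z1 + M2a2 * z2 + M2b1 * w1 + M2b2 * w2)) - rX * M2l) / l)
      + l * rY * (((- (Da1 * z1 + Da2 * z2 + Db1 * w1 + Db2 * w2)) - rX * Dl) / l))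
    = \<i> * ((z1 - k * z2) * (w1y - kb * w2y) - (z1y - k * z2y) * (w1 - kb * w2))
      + rX * (P * (z1y - k * z2y) - L1k * z2y + Pb * (w1y - kb * w2y) - M1kb * w2y)
      - rY * (P * (z1 - k * z2) - L1k * z2 + Pb * (w1 - kb * w2) - M1kb * w2)"
proof -
  have s: "L2a1 = L1a2" "M2b1 = M1b2" "L1b1 = M1a1 - \<i> * l" "L2b1 = M1a2 + \<i> * k * l"
    "L1b2 = M2a1 + \<i> * kb * l" "L2b2 = M2a2 - \<i> * k * kb * l"
    "L2l = l * (k * Da1 + Da2 - L1k) - k * L1l" "M2l = l * (kb * Db1 + Db2 - M1kb) - kb * M1l"
    using assms(2-9) by (simp_all add: algebra_simps)
  show ?thesis
    unfolding s assms(10,11) using assms(1) by (simp add: field_simps)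
qed

text \<open>In the remaining algebra a tangent vector is represented by its coordinates \<open>r, t, z, tb, zb\<close>
  with respect to \<open>\<rho>\<^sub>0, \<theta>, dz\<^sub>2, \<theta>-bar, dz\<^sub>2-bar\<close>; \<open>m = L\<^sub>1-bar(k)\<close>, \<open>n = L\<^sub>1-bar(m)\<close> and \<open>mb, nb\<close> are their
  conjugates.\<close>

lemma rho0_structure_algebra:
  fixes rX tX zX tbX zbX rY tY zY tbY zbY m mb n nb P Pb L1k M1kb
    \<kappa>X \<kappa>bX \<zeta>X \<zeta>bX \<kappa>Y \<kappa>bY \<zeta>Y \<zeta>bY :: complex
  assumes "m \<noteq> 0" "mb \<noteq> 0"
    and "\<kappa>X = tX + \<i> / 3 * (n / m - Pb) * rX" "\<kappa>bX = tbX - \<i> / 3 * (nb / mb - P) * rX"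
      "\<zeta>X = m * zX" "\<zeta>bX = mb * zbX"
    and "\<kappa>Y = tY + \<i> / 3 * (n / m - Pb) * rY" "\<kappa>bY = tbY - \<i> / 3 * (nb / mb - P) * rY"
      "\<zeta>Y = m * zY" "\<zeta>bY = mb * zbY"
  shows "\<i> * (tX * tbY - tY * tbX)
      + rX * (P * tY - L1k * zY + Pb * tbY - M1kb * zbY) - rY * (P * tX - L1k * zX + Pb * tbX - M1kb * zbX) =
      (1/3 * nb / mb + 2/3 * P) * (rX * \<kappa>Y - rY * \<kappa>X)
    - L1k / m * (rX * \<zeta>Y - rY * \<zeta>X)
    + (1/3 * n / m + 2/3 * Pb) * (rX * \<kappa>bY - rY * \<kappa>bX)
    - M1kb / mb * (rX * \<zeta>bY - rY * \<zeta>bX)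
    + \<i> * (\<kappa>X * \<kappa>bY - \<kappa>Y * \<kappa>bX)"
  unfolding assms(3-10) using assms(1,2) by (simp add: field_simps)

lemma kappa0_structure_algebra:
  fixes rX tX zX tbX zbX rY tY zY tbY zbY m mb n nb P Pb L1k Kk Tk M1kb Kbk B BL1 BK BLb1 BKb BT Erho
    L1n L1m L1Pb Kn Km M1L1k M1n M1Pb \<kappa>X \<kappa>bX \<zeta>X \<zeta>bX \<kappa>Y \<kappa>bY \<zeta>Y \<zeta>bY :: complex
  assumes "m \<noteq> 0" "mb \<noteq> 0"
    and "\<kappa>X = tX + \<i> / 3 * (n / m - Pb) * rX" "\<kappa>bX = tbX - \<i> / 3 * (nb / mb - P) * rX"
      "\<zeta>X = m * zX" "\<zeta>bX = mb * zbX"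
    and "\<kappa>Y = tY + \<i> / 3 * (n / m - Pb) * rY" "\<kappa>bY = tbY - \<i> / 3 * (nb / mb - P) * rY"
      "\<zeta>Y = m * zY" "\<zeta>bY = mb * zbY"
    and "Erho = \<i> * (tX * tbY - tY * tbX)
      + rX * (P * tY - L1k * zY + Pb * tbY - M1kb * zbY) - rY * (P * tX - L1k * zX + Pb * tbX - M1kb * zbX)"
    and "Kbk = 0" "B = n / m - Pb"
      "BL1 = (m * L1n - n * L1m) / (m * m) - L1Pb"
      "BK = (m * Kn - n * Km) / (m * m) + \<i> * Tk + P * m + M1L1k"
      "BLb1 = (m * M1n - n * n) / (m * m) - M1Pb"
      "BKb = - (M1kb * B)"
  shows "- ((tX * L1k + zX * Kk + tbX * m + zbX * Kbk + rX * Tk) * zY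
         - (tY * L1k + zY * Kk + tbY * m + zbY * Kbk + rY * Tk) * zX)
      + \<i> / 3 * ((tX * BL1 + zX * BK + tbX * BLb1 + zbX * BKb + rX * BT) * rY
         - (tY * BL1 + zY * BK + tbY * BLb1 + zbY * BKb + rY * BT) * rX)
      + \<i> / 3 * B * Erho =
      (- \<i>/3 * L1n / m
       + \<i>/9 * nb * n / (mb * m)
       + \<i>/3 * L1m * n / (m)^2
       - \<i>/9 * nb / mb * Pb
       + 2*\<i>/9 * n / m * P
       + \<i>/3 * L1Pb
       - 2*\<i>/9 * P * Pb) * (rX * \<kappa>Y - rY * \<kappa>X)
    + (- \<i>/3 * Kn / (m)^2
       + \<i>/3 * Km * n / (m)^3
       - \<i>/3 * nb / mb
       - \<i>/3 * M1L1k / m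
       - 2/3 * Tk / m) * (rX * \<zeta>Y - rY * \<zeta>X)
    + (- \<i>/3 * M1n / m
       + 4*\<i>/9 * (n)^2 / (m)^2
       + \<i>/9 * n / m * Pb
       + \<i>/3 * M1Pb
       - 2*\<i>/9 * Pb * Pb) * (rX * \<kappa>bY - rY * \<kappa>bX)
    + 0 * (rX * \<zeta>bY - rY * \<zeta>bX)
    - L1k / m * (\<kappa>X * \<zeta>Y - \<kappa>Y * \<zeta>X)
    + (- 1/3 * n / m + 1/3 * Pb) * (\<kappa>X * \<kappa>bY - \<kappa>Y * \<kappa>bX)
    + (\<zeta>X * \<kappa>bY - \<zeta>Y * \<kappa>bX)"
  unfolding assms(3-17) using assms(1,2) by (simp add: field_simps power2_eq_square power3_eq_cube)

lemma zeta0_structure_algebra: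
  fixes rX tX zX tbX zbX rY tY zY tbY zbY m mb n nb P Pb M1kb L1m Km Kbm Tm
    \<kappa>X \<kappa>bX \<zeta>X \<zeta>bX \<kappa>Y \<kappa>bY \<zeta>Y \<zeta>bY :: complex
  assumes "m \<noteq> 0" "mb \<noteq> 0"
    and "\<kappa>X = tX + \<i> / 3 * (n / m - Pb) * rX" "\<kappa>bX = tbX - \<i> / 3 * (nb / mb - P) * rX"
      "\<zeta>X = m * zX" "\<zeta>bX = mb * zbX"
    and "\<kappa>Y = tY + \<i> / 3 * (n / m - Pb) * rY" "\<kappa>bY = tbY - \<i> / 3 * (nb / mb - P) * rY"
      "\<zeta>Y = m * zY" "\<zeta>bY = mb * zbY"
    and "Kbm = - (m * M1kb)"
  shows "(tX * L1m + zX * Km + tbX * n + zbX * Kbm + rX * Tm) * zY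
       - (tY * L1m + zY * Km + tbY * n + zbY * Kbm + rY * Tm) * zX =
      (\<i>/3 * nb * n / (mb * m)
       - \<i>/3 * L1m * n / (m)^2
       - \<i>/3 * n / m * P
       + \<i>/3 * L1m / m * Pb
       + Tm / m) * (rX * \<zeta>Y - rY * \<zeta>X)
    + L1m / m * (\<kappa>X * \<zeta>Y - \<kappa>Y * \<zeta>X)
    - n / m * (\<zeta>X * \<kappa>bY - \<zeta>Y * \<kappa>bX)
    + M1kb / mb * (\<zeta>X * \<zeta>bY - \<zeta>Y * \<zeta>bX)"
  unfolding assms(3-11) using assms(1,2) by (simp add: field_simps power2_eq_square)

context levi_rank_one
begin

lemma L1_kb_nonzero: "x \<in> U \<Longrightarrow> L1 kb x \<noteq> 0"
  using Lb1_k_nonzero[of x] cnj_Lb1_k[of x] by (metis complex_cnj_zero_iff)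

lemma rho0_real: "x \<in> U \<Longrightarrow> cnj (rho0 F x X) = rho0 F x X"
  using l_real[of x] by (simp add: rho0_def fv_def algebra_simps)

lemma dirD_frame:
  assumes "smooth_fn U g" "x \<in> U"
  shows "dirD g X x = theta F x X * L1 g x + fz2 X * K g x + cnj (theta F x X) * Lb1 g x
    + cnj (fz2 X) * Kb g x + rho0 F x X * T g x"
  by (rule trans[OF dirD_coords[OF smooth_fn_differentiable[OF open_U assms]]])
     (use ell_nonzero[OF assms(2)] in \<open>simp add: theta_def Kop_def Kbop_def Top_def rho0_def field_simps\<close>)

lemma smooth_rho0: "smooth_fn U (\<lambda>q. rho0 F q Y)"
  unfolding rho0_def[abs_def]
  by (intro smooth_fn_divide smooth_fn_diff smooth_fn.mult smooth_fn.const smooth_rules)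
     (use ell_nonzero in auto)

lemma derivation_rho0:
  assumes "is_vfield U D" "x \<in> U"
  shows "D (\<lambda>q. rho0 F q Y) x = (- (D a1 x * fz1 Y + D a2 x * fz2 Y + D b1 x * cnj (fz1 Y)
    + D b2 x * cnj (fz2 Y)) - rho0 F x Y * D l x) / l x"
proof -
  have "D (\<lambda>q. fv Y - a1 q * fz1 Y - a2 q * fz2 Y - b1 q * cnj (fz1 Y) - b2 q * cnj (fz2 Y)) x
      = - (D a1 x * fz1 Y + D a2 x * fz2 Y + D b1 x * cnj (fz1 Y) + D b2 x * cnj (fz2 Y))"
    using assms(2)
    by (simp add: derivation_diff[OF open_U assms(1)] derivation_mult[OF open_U assms(1)]
        derivation_const[OF open_U assms(1)] smooth_rules)
  then show ?thesis
    unfolding rho0_def[abs_def] using assms(2) ell_nonzero[OF assms(2)]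
    by (simp add: derivation_divide[OF open_U assms(1)] smooth_rules) (simp add: rho0_def field_simps)
qed

lemma dirD_coords_rho0:
  assumes "smooth_fn U g" "x \<in> U"
  shows "dirD g X x = fz1 X * L1 g x + fz2 X * L2 g x + cnj (fz1 X) * Lb1 g x + cnj (fz2 X) * Lb2 g x
    + l x * rho0 F x X * dv g x"
  using dirD_coords[OF smooth_fn_differentiable[OF open_U assms], of X F] ell_nonzero[OF assms(2)]
  by (simp add: rho0_def)

lemma extd_rho0:
  assumes "x \<in> U"
  shows "extd (rho0 F) x X Y = \<i> * wedge (theta F) (conjform (theta F)) x X Y
    + rho0 F x X * (P x * theta F x Y - L1 k x * fz2 Y + Pb x * cnj (theta F x Y) - Lb1 kb x * cnj (fz2 Y))
    - rho0 F x Y * (P x * theta F x X - L1 k x * fz2 X + Pb x * cnj (theta F x X) - Lb1 kb x * cnj (fz2 X))"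
proof -
  have K_l': "k x * L1 l x + L2 l x = l x * (k x * dv a1 x + dv a2 x - L1 k x)"
    using K_l[OF assms] by (simp add: Kop_def)
  have Kb_l': "kb x * Lb1 l x + Lb2 l x = l x * (kb x * dv b1 x + dv b2 x - Lb1 kb x)"
    using Kb_l[OF assms] by (simp add: Kbop_def)
  show ?thesis
    unfolding extd_def wedge_def theta_def conjform_def complex_cnj_diff complex_cnj_mult
      dirD_coords_rho0[OF smooth_rho0 assms] derivation_rho0[OF is_vfield_L1 assms]
      derivation_rho0[OF is_vfield_L2 assms] derivation_rho0[OF is_vfield_Lb1 assms]
      derivation_rho0[OF is_vfield_Lb2 assms] derivation_rho0[OF is_vfield_dv assms]
    by (rule drho0_algebra[OF ell_nonzero[OF assms] L1_a2_eq_L2_a1[OF assms] Lb1_b2_eq_Lb2_b1[OF assms]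
          levi_11 levi_21[OF assms] levi_12[OF assms] levi_22[OF assms] K_l' Kb_l' P_eq[OF assms] Pb_eq[OF assms]])
qed

lemma extd_kappa0_expand:
  assumes "x \<in> U"
  shows "extd (kappa0 F) x X Y = - (dirD k X x * fz2 Y - dirD k Y x * fz2 X)
    + \<i> / 3 * (dirD (B0 F) X x * rho0 F x Y - dirD (B0 F) Y x * rho0 F x X)
    + \<i> / 3 * B0 F x * extd (rho0 F) x X Y"
proof -
  have dk: "k differentiable (at x)" using smooth_fn_differentiable[OF open_U smooth_k assms] .
  have dB: "(\<lambda>q. \<i> / 3 * B0 F q) differentiable (at x)"
    using smooth_fn_differentiable[OF open_U smooth_B0 assms] by (intro differentiable_mult) auto
  have d\<rho>: "(\<lambda>q. rho0 F q Z) differentiable (at x)" for Z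
    using smooth_fn_differentiable[OF open_U smooth_rho0 assms] .
  have d\<kappa>: "dirD (\<lambda>q. kappa0 F q Z) W x = - (dirD k W x * fz2 Z)
      + \<i> / 3 * (B0 F x * dirD (\<lambda>q. rho0 F q Z) W x + dirD (B0 F) W x * rho0 F x Z)" for Z W
  proof -
    have "(\<lambda>q. kappa0 F q Z) = (\<lambda>q. (fz1 Z - k q * fz2 Z) + (\<i> / 3 * B0 F q) * rho0 F q Z)"
      by (simp add: kappa0_def[abs_def] mult.assoc)
    moreover have "(\<lambda>q. fz1 Z - k q * fz2 Z) differentiable (at x)"
      using dk by (intro differentiable_diff differentiable_mult) auto
    ultimately have "dirD (\<lambda>q. kappa0 F q Z) W x = dirD (\<lambda>q. fz1 Z - k q * fz2 Z) W x
        + dirD (\<lambda>q. (\<i> / 3 * B0 F q) * rho0 F q Z) W x"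
      using dirD_add[OF _ differentiable_mult[OF dB d\<rho>]] by simp
    also have "dirD (\<lambda>q. fz1 Z - k q * fz2 Z) W x = - (dirD k W x * fz2 Z)"
      using dk by (simp add: dirD_diff dirD_mult)
    also have "dirD (\<lambda>q. (\<i> / 3 * B0 F q) * rho0 F q Z) W x
        = \<i> / 3 * B0 F x * dirD (\<lambda>q. rho0 F q Z) W x + dirD (\<lambda>q. \<i> / 3 * B0 F q) W x * rho0 F x Z"
      using dB d\<rho> by (rule dirD_mult)
    also have "dirD (\<lambda>q. \<i> / 3 * B0 F q) W x = \<i> / 3 * dirD (B0 F) W x"
      using dirD_mult[OF differentiable_const smooth_fn_differentiable[OF open_U smooth_B0 assms], of "\<i> / 3" W] by simp
    finally show ?thesis by (simp add: algebra_simps)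
  qed
  show ?thesis unfolding extd_def d\<kappa> by (simp add: algebra_simps)
qed

lemma extd_zeta0_expand:
  "x \<in> U \<Longrightarrow> extd (zeta0 F) x X Y = dirD (Lb1 k) X x * fz2 Y - dirD (Lb1 k) Y x * fz2 X"
  using smooth_fn_differentiable[OF open_U derivation_smooth[OF open_U is_vfield_Lb1 smooth_k]]
  by (simp add: extd_def zeta0_def[abs_def] dirD_mult)

lemma coframe_values:
  assumes "x \<in> U"
  shows "kappa0 F x h = theta F x h + \<i> / 3 * (Lb1 (Lb1 k) x / Lb1 k x - Pb x) * rho0 F x h"
    and "cnj (kappa0 F x h) = cnj (theta F x h) - \<i> / 3 * (L1 (L1 kb) x / L1 kb x - P x) * rho0 F x h"
    and "zeta0 F x h = Lb1 k x * fz2 h"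
    and "cnj (zeta0 F x h) = L1 kb x * cnj (fz2 h)"
  using cnj_Lb1_Lb1_k[OF assms] cnj_Lb1_k[OF assms] rho0_real[OF assms]
  by (simp_all add: kappa0_def B0_def theta_def zeta0_def)

lemma derivation_B0:
  assumes "is_vfield U D" "x \<in> U"
  shows "D (B0 F) x = (Lb1 k x * D (Lb1 (Lb1 k)) x - Lb1 (Lb1 k) x * D (Lb1 k) x) / (Lb1 k x * Lb1 k x)
    - D Pb x"
  unfolding B0_def[abs_def] using assms(2) Lb1_k_nonzero
  by (simp add: derivation_diff[OF open_U assms(1)] derivation_divide[OF open_U assms(1)]
      smooth_rules smooth_fn_divide smooth_Pb)

lemma extd_rho0_structure:
  assumes "x \<in> U"
  shows "extd (rho0 F) x X Y =
      (1/3 * L1 (L1 kb) x / L1 kb x + 2/3 * P x) * wedge (rho0 F) (kappa0 F) x X Y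
    - L1 k x / Lb1 k x * wedge (rho0 F) (zeta0 F) x X Y
    + (1/3 * Lb1 (Lb1 k) x / Lb1 k x + 2/3 * Pb x) * wedge (rho0 F) (conjform (kappa0 F)) x X Y
    - Lb1 kb x / L1 kb x * wedge (rho0 F) (conjform (zeta0 F)) x X Y
    + \<i> * wedge (kappa0 F) (conjform (kappa0 F)) x X Y"
  unfolding extd_rho0[OF assms] wedge_def conjform_def
  by (rule rho0_structure_algebra[OF Lb1_k_nonzero[OF assms] L1_kb_nonzero[OF assms]
        coframe_values[OF assms, of X] coframe_values[OF assms, of Y]])

lemma K_B0: "x \<in> U \<Longrightarrow> K (B0 F) x =
    (Lb1 k x * K (Lb1 (Lb1 k)) x - Lb1 (Lb1 k) x * K (Lb1 k) x) / (Lb1 k x * Lb1 k x)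
    + \<i> * T k x + P x * Lb1 k x + Lb1 (L1 k) x"
  using derivation_B0[OF is_vfield_K] K_Pb by simp

lemma extd_kappa0_structure:
  assumes "x \<in> U"
  shows "extd (kappa0 F) x X Y =
      (- \<i>/3 * L1 (Lb1 (Lb1 k)) x / Lb1 k x
       + \<i>/9 * L1 (L1 kb) x * Lb1 (Lb1 k) x / (L1 kb x * Lb1 k x)
       + \<i>/3 * L1 (Lb1 k) x * Lb1 (Lb1 k) x / (Lb1 k x)^2
       - \<i>/9 * L1 (L1 kb) x / L1 kb x * Pb x
       + 2*\<i>/9 * Lb1 (Lb1 k) x / Lb1 k x * P x
       + \<i>/3 * L1 Pb x
       - 2*\<i>/9 * P x * Pb x) * wedge (rho0 F) (kappa0 F) x X Y
    + (- \<i>/3 * K (Lb1 (Lb1 k)) x / (Lb1 k x)^2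
       + \<i>/3 * K (Lb1 k) x * Lb1 (Lb1 k) x / (Lb1 k x)^3
       - \<i>/3 * L1 (L1 kb) x / L1 kb x
       - \<i>/3 * Lb1 (L1 k) x / Lb1 k x
       - 2/3 * T k x / Lb1 k x) * wedge (rho0 F) (zeta0 F) x X Y
    + (- \<i>/3 * Lb1 (Lb1 (Lb1 k)) x / Lb1 k x
       + 4*\<i>/9 * (Lb1 (Lb1 k) x)^2 / (Lb1 k x)^2
       + \<i>/9 * Lb1 (Lb1 k) x / Lb1 k x * Pb x
       + \<i>/3 * Lb1 Pb x
       - 2*\<i>/9 * Pb x * Pb x) * wedge (rho0 F) (conjform (kappa0 F)) x X Y
    + 0 * wedge (rho0 F) (conjform (zeta0 F)) x X Y
    - L1 k x / Lb1 k x * wedge (kappa0 F) (zeta0 F) x X Y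
    + (- 1/3 * Lb1 (Lb1 k) x / Lb1 k x + 1/3 * Pb x) * wedge (kappa0 F) (conjform (kappa0 F)) x X Y
    + wedge (zeta0 F) (conjform (kappa0 F)) x X Y"
  unfolding extd_kappa0_expand[OF assms] dirD_frame[OF smooth_k assms] dirD_frame[OF smooth_B0 assms]
    wedge_def conjform_def
  by (rule kappa0_structure_algebra[OF Lb1_k_nonzero[OF assms] L1_kb_nonzero[OF assms]
        coframe_values[OF assms, of X] coframe_values[OF assms, of Y]
        extd_rho0[OF assms, unfolded wedge_def conjform_def] Kb_k[OF assms] B0_def[of F x]
        derivation_B0[OF is_vfield_L1 assms] K_B0[OF assms] derivation_B0[OF is_vfield_Lb1 assms]
        Kb_B0[OF assms]])

lemma extd_zeta0_structure:
  assumes "x \<in> U"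
  shows "extd (zeta0 F) x X Y =
      (\<i>/3 * L1 (L1 kb) x * Lb1 (Lb1 k) x / (L1 kb x * Lb1 k x)
       - \<i>/3 * L1 (Lb1 k) x * Lb1 (Lb1 k) x / (Lb1 k x)^2
       - \<i>/3 * Lb1 (Lb1 k) x / Lb1 k x * P x
       + \<i>/3 * L1 (Lb1 k) x / Lb1 k x * Pb x
       + T (Lb1 k) x / Lb1 k x) * wedge (rho0 F) (zeta0 F) x X Y
    + L1 (Lb1 k) x / Lb1 k x * wedge (kappa0 F) (zeta0 F) x X Y
    - Lb1 (Lb1 k) x / Lb1 k x * wedge (zeta0 F) (conjform (kappa0 F)) x X Y
    + Lb1 kb x / L1 kb x * wedge (zeta0 F) (conjform (zeta0 F)) x X Y"
  unfolding extd_zeta0_expand[OF assms] dirD_frame[OF derivation_smooth[OF open_U is_vfield_Lb1 smooth_k] assms]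
    wedge_def conjform_def
  by (rule zeta0_structure_algebra[OF Lb1_k_nonzero[OF assms] L1_kb_nonzero[OF assms]
        coframe_values[OF assms, of X] coframe_values[OF assms, of Y] Kb_Lb1_k[OF assms]])

end

theorem proposition7p2:
  fixes F :: "pt \<Rightarrow> real" and U :: "pt set" and p X Y :: pt
  assumes "open U"
    and "real_analytic_on U F"
    and "\<forall>x\<in>U. ell F x \<noteq> 0"
    and "\<forall>x\<in>U. rank (levi F x) = 1"
    and "\<forall>x\<in>U. Lb1op F (kk F) x \<noteq> 0"
    and "p \<in> U"
  defines "k \<equiv> kk F" and "kb \<equiv> \<lambda>q. cnj (kk F q)"
    and "L1 \<equiv> L1op F" and "Lb1 \<equiv> Lb1op F" and "K \<equiv> Kop F" and "T \<equiv> Top F"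
    and "P \<equiv> PP F" and "Pb \<equiv> \<lambda>q. cnj (PP F q)"
    and "\<rho> \<equiv> rho0 F" and "\<kappa> \<equiv> kappa0 F" and "\<zeta> \<equiv> zeta0 F"
    and "\<kappa>b \<equiv> conjform (kappa0 F)" and "\<zeta>b \<equiv> conjform (zeta0 F)"
  shows
   "extd \<rho> p X Y =
      (1/3 * L1 (L1 kb) p / L1 kb p + 2/3 * P p) * wedge \<rho> \<kappa> p X Y
    - L1 k p / Lb1 k p * wedge \<rho> \<zeta> p X Y
    + (1/3 * Lb1 (Lb1 k) p / Lb1 k p + 2/3 * Pb p) * wedge \<rho> \<kappa>b p X Y
    - Lb1 kb p / L1 kb p * wedge \<rho> \<zeta>b p X Y
    + \<i> * wedge \<kappa> \<kappa>b p X Y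
   \<and>
   extd \<kappa> p X Y =
      (- \<i>/3 * L1 (Lb1 (Lb1 k)) p / Lb1 k p
       + \<i>/9 * L1 (L1 kb) p * Lb1 (Lb1 k) p / (L1 kb p * Lb1 k p)
       + \<i>/3 * L1 (Lb1 k) p * Lb1 (Lb1 k) p / (Lb1 k p)^2
       - \<i>/9 * L1 (L1 kb) p / L1 kb p * Pb p
       + 2*\<i>/9 * Lb1 (Lb1 k) p / Lb1 k p * P p
       + \<i>/3 * L1 Pb p
       - 2*\<i>/9 * P p * Pb p) * wedge \<rho> \<kappa> p X Y
    + (- \<i>/3 * K (Lb1 (Lb1 k)) p / (Lb1 k p)^2
       + \<i>/3 * K (Lb1 k) p * Lb1 (Lb1 k) p / (Lb1 k p)^3
       - \<i>/3 * L1 (L1 kb) p / L1 kb p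
       - \<i>/3 * Lb1 (L1 k) p / Lb1 k p
       - 2/3 * T k p / Lb1 k p) * wedge \<rho> \<zeta> p X Y
    + (- \<i>/3 * Lb1 (Lb1 (Lb1 k)) p / Lb1 k p
       + 4*\<i>/9 * (Lb1 (Lb1 k) p)^2 / (Lb1 k p)^2
       + \<i>/9 * Lb1 (Lb1 k) p / Lb1 k p * Pb p
       + \<i>/3 * Lb1 Pb p
       - 2*\<i>/9 * Pb p * Pb p) * wedge \<rho> \<kappa>b p X Y
    + 0 * wedge \<rho> \<zeta>b p X Y
    - L1 k p / Lb1 k p * wedge \<kappa> \<zeta> p X Y
    + (- 1/3 * Lb1 (Lb1 k) p / Lb1 k p + 1/3 * Pb p) * wedge \<kappa> \<kappa>b p X Y
    + wedge \<zeta> \<kappa>b p X Y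
   \<and>
   extd \<zeta> p X Y =
      (\<i>/3 * L1 (L1 kb) p * Lb1 (Lb1 k) p / (L1 kb p * Lb1 k p)
       - \<i>/3 * L1 (Lb1 k) p * Lb1 (Lb1 k) p / (Lb1 k p)^2
       - \<i>/3 * Lb1 (Lb1 k) p / Lb1 k p * P p
       + \<i>/3 * L1 (Lb1 k) p / Lb1 k p * Pb p
       + T (Lb1 k) p / Lb1 k p) * wedge \<rho> \<zeta> p X Y
    + L1 (Lb1 k) p / Lb1 k p * wedge \<kappa> \<zeta> p X Y
    - Lb1 (Lb1 k) p / Lb1 k p * wedge \<zeta> \<kappa>b p X Y
    + Lb1 kb p / L1 kb p * wedge \<zeta> \<zeta>b p X Y"
proof -
  interpret levi_rank_one F U
    using assms(1-5) by unfold_locales (auto simp: real_analytic_on_def)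
  show ?thesis
    unfolding assms(7-19)
    using extd_rho0_structure extd_kappa0_structure extd_zeta0_structure assms(6) by blast
qed

end
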